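(* Let $C=V^{(q)}\cap\mathcal{F}^{\otimes n}W^{(q)}$ be a CSS code on $n$ qupits, with $V,W\le\mathbb{Z}_p^n$ linear and $V^\perp\subseteq W$, and let $B\subseteq\{1,\dots,n\}$. Suppose the state $\rho$ has fidelity 1 with $C_B=V_B^{(q)}\cap\mathcal{F}^{\otimes n}W_B^{(q)}$. Then $\rho$ can be written as $\rho=\sum_i p_i|\psi_i\rangle\langle\psi_i|$ with $|\psi_i\rangle=\sum_j c_{ij}E_j|\phi_{ij}\rangle$, where each $E_j$ is a Pauli operator whose support is contained in $B$ and each $|\phi_{ij}\rangle\in C$.
   Context: A qupit is $\mathbb{C}^p$ for a prime $p$, with basis $\{|a\rangle:a\in\mathbb{Z}_p\}$. Set $\omega=e^{2\pi i/p}$, $\mathcal{F}|a\rangle=\frac1{\sqrt p}\sum_b\omega^{ab}|b\rangle$, $X|a\rangle=|a+1\rangle$ and $Z|a\rangle=\omega^a|a\rangle$. Pauli operators on $n$ qupits are the tensor products $X^{\mathbf x}Z^{\mathbf z}$, and their support is the set of positions where they act non-trivially. For a linear code $U\le\mathbb{Z}_p^n$, let $U^{(q)}=\mathrm{span}\{|\mathbf u\rangle:\mathbf u\in U\}$. For $B\subseteq\{1,\dots,n\}$, let $V_B=\{\mathbf v\in\mathbb{Z}_p^n:\exists\mathbf w\in V\text{ with }\mathrm{supp}(\mathbf v-\mathbf w)\subseteq B\}$, and define $W_B$ analogously. *)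

theory Defs
  imports Complex_Main "HOL-Computational_Algebra.Primes"
begin

text \<open>Vectors of Z_p^n: functions nat => nat, entries < p at positions 0..n-1,
  and 0 elsewhere (qupit positions are indexed 0..n-1).\<close>
definition Zpn :: "nat \<Rightarrow> nat \<Rightarrow> (nat \<Rightarrow> nat) set" where
  "Zpn p n = {v. (\<forall>i<n. v i < p) \<and> (\<forall>i\<ge>n. v i = 0)}"

definition vadd :: "nat \<Rightarrow> (nat \<Rightarrow> nat) \<Rightarrow> (nat \<Rightarrow> nat) \<Rightarrow> (nat \<Rightarrow> nat)" where
  "vadd p u v = (\<lambda>i. (u i + v i) mod p)"

definition vsub :: "nat \<Rightarrow> (nat \<Rightarrow> nat) \<Rightarrow> (nat \<Rightarrow> nat) \<Rightarrow> (nat \<Rightarrow> nat)" where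
  "vsub p u v = (\<lambda>i. (u i + p - v i) mod p)"

definition smul :: "nat \<Rightarrow> nat \<Rightarrow> (nat \<Rightarrow> nat) \<Rightarrow> (nat \<Rightarrow> nat)" where
  "smul p a v = (\<lambda>i. (a * v i) mod p)"

definition dot :: "nat \<Rightarrow> nat \<Rightarrow> (nat \<Rightarrow> nat) \<Rightarrow> (nat \<Rightarrow> nat) \<Rightarrow> nat" where
  "dot p n u v = (\<Sum>i<n. u i * v i) mod p"

definition linear_code :: "nat \<Rightarrow> nat \<Rightarrow> (nat \<Rightarrow> nat) set \<Rightarrow> bool" where
  "linear_code p n U \<longleftrightarrow> U \<subseteq> Zpn p n \<and> (\<lambda>i. 0) \<in> U \<and>
     (\<forall>u\<in>U. \<forall>v\<in>U. vadd p u v \<in> U) \<and> (\<forall>a<p. \<forall>u\<in>U. smul p a u \<in> U)"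

definition dual_code :: "nat \<Rightarrow> nat \<Rightarrow> (nat \<Rightarrow> nat) set \<Rightarrow> (nat \<Rightarrow> nat) set" where
  "dual_code p n U = {w \<in> Zpn p n. \<forall>u\<in>U. dot p n w u = 0}"

text \<open>V_B: vectors differing from some element of V only on positions in B.\<close>
definition punct :: "nat \<Rightarrow> nat \<Rightarrow> (nat \<Rightarrow> nat) set \<Rightarrow> nat set \<Rightarrow> (nat \<Rightarrow> nat) set" where
  "punct p n U B = {v \<in> Zpn p n. \<exists>w\<in>U. \<forall>i. i \<notin> B \<longrightarrow> v i = w i}"

text \<open>Quantum states on n qupits: complex amplitudes indexed by Z_p^n.\<close>
type_synonym qvec = "(nat \<Rightarrow> nat) \<Rightarrow> complex"

definition omega :: "nat \<Rightarrow> nat \<Rightarrow> complex" where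
  "omega p k = cis (2 * pi * real k / real p)"

definition ket :: "(nat \<Rightarrow> nat) \<Rightarrow> qvec" where
  "ket u = (\<lambda>x. if x = u then 1 else 0)"

text \<open>U^(q) = span of the basis kets |u>, u in U.\<close>
definition qcode :: "nat \<Rightarrow> nat \<Rightarrow> (nat \<Rightarrow> nat) set \<Rightarrow> qvec set" where
  "qcode p n U = {\<psi>. \<exists>c :: (nat \<Rightarrow> nat) \<Rightarrow> complex. \<psi> = (\<lambda>x. \<Sum>u\<in>U. c u * ket u x)}"

definition qft :: "nat \<Rightarrow> nat \<Rightarrow> qvec \<Rightarrow> qvec" where
  "qft p n \<psi> = (\<lambda>y. if y \<in> Zpn p n then
      (1 / complex_of_real (sqrt (real p))) ^ n * (\<Sum>x\<in>Zpn p n. omega p (dot p n x y) * \<psi> x)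
     else 0)"

definition css_code :: "nat \<Rightarrow> nat \<Rightarrow> (nat \<Rightarrow> nat) set \<Rightarrow> (nat \<Rightarrow> nat) set \<Rightarrow> qvec set" where
  "css_code p n V W = qcode p n V \<inter> qft p n ` qcode p n W"

text \<open>Pauli operator X^x Z^z: |a> \<mapsto> omega^{z.a} |a+x>.\<close>
definition pauli :: "nat \<Rightarrow> nat \<Rightarrow> (nat \<Rightarrow> nat) \<Rightarrow> (nat \<Rightarrow> nat) \<Rightarrow> qvec \<Rightarrow> qvec" where
  "pauli p n x z \<psi> = (\<lambda>b. if b \<in> Zpn p n then
      omega p (dot p n z (vsub p b x)) * \<psi> (vsub p b x) else 0)"

definition pauli_supp :: "(nat \<Rightarrow> nat) \<Rightarrow> (nat \<Rightarrow> nat) \<Rightarrow> nat set" where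
  "pauli_supp x z = {i. x i \<noteq> 0 \<or> z i \<noteq> 0}"

definition cinner :: "nat \<Rightarrow> nat \<Rightarrow> qvec \<Rightarrow> qvec \<Rightarrow> complex" where
  "cinner p n \<psi> \<phi> = (\<Sum>x\<in>Zpn p n. cnj (\<psi> x) * \<phi> x)"

definition in_space :: "nat \<Rightarrow> nat \<Rightarrow> qvec \<Rightarrow> bool" where
  "in_space p n \<psi> \<longleftrightarrow> (\<forall>x. x \<notin> Zpn p n \<longrightarrow> \<psi> x = 0)"

type_synonym qop = "(nat \<Rightarrow> nat) \<Rightarrow> (nat \<Rightarrow> nat) \<Rightarrow> complex"

definition density :: "nat \<Rightarrow> nat \<Rightarrow> qop \<Rightarrow> bool" where
  "density p n \<rho> \<longleftrightarrow>
     (\<forall>x y. x \<notin> Zpn p n \<or> y \<notin> Zpn p n \<longrightarrow> \<rho> x y = 0) \<and>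
     (\<forall>x y. \<rho> y x = cnj (\<rho> x y)) \<and>
     (\<forall>\<psi>. 0 \<le> Re (\<Sum>x\<in>Zpn p n. \<Sum>y\<in>Zpn p n. cnj (\<psi> x) * \<rho> x y * \<psi> y)) \<and>
     (\<Sum>x\<in>Zpn p n. \<rho> x x) = 1"

definition proj :: "nat \<Rightarrow> nat \<Rightarrow> qvec set \<Rightarrow> qvec \<Rightarrow> qvec" where
  "proj p n S \<psi> = (THE \<phi>. \<phi> \<in> S \<and> in_space p n \<phi> \<and>
       (\<forall>\<chi>\<in>S. cinner p n \<chi> (\<lambda>x. \<psi> x - \<phi> x) = 0))"

text \<open>Fidelity of a state with a code (subspace) S: tr(\<Pi>_S \<rho>).\<close>
definition code_fidelity :: "nat \<Rightarrow> nat \<Rightarrow> qvec set \<Rightarrow> qop \<Rightarrow> complex" where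
  "code_fidelity p n S \<rho> = (\<Sum>x\<in>Zpn p n. proj p n S (\<lambda>y. \<rho> y x) x)"

end

theory Submission
  imports Defs "HOL-Library.FuncSet" "HOL-Library.Indicator_Function"
begin

text \<open>
  The density operator \<open>\<rho>\<close> is a positive combination \<open>\<Sum>\<^sub>i p\<^sub>i |\<psi>\<^sub>i\<rangle>\<langle>\<psi>\<^sub>i|\<close> of unit vectors
  (a Cholesky-type decomposition of the positive semidefinite matrix \<open>\<rho>\<close>). The projector onto
  \<open>C\<^sub>B\<close> averages over translates by \<open>W\<^sub>B\<^sup>\<perp>\<close> and restricts to \<open>V\<^sub>B\<close>; fidelity 1 then forces
  every \<open>\<psi>\<^sub>i\<close> into \<open>C\<^sub>B\<close>. For \<open>\<psi> \<in> C\<^sub>B\<close>, twirling the projector \<open>\<Pi>\<^sub>C\<close> onto \<open>C\<close> over all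
  Paulis supported on \<open>B\<close> gives \<open>\<Sum>\<^sub>a\<^sub>,\<^sub>z X\<^sup>aZ\<^sup>z \<Pi>\<^sub>C (X\<^sup>aZ\<^sup>z)\<^sup>\<dagger> \<psi> = K \<psi>\<close> with \<open>K \<noteq> 0\<close>,
  which is the required expansion with \<open>\<phi> = \<Pi>\<^sub>C (X\<^sup>aZ\<^sup>z)\<^sup>\<dagger> \<psi> \<in> C\<close>.
  Identifying \<open>\<F>\<^sup>\<otimes>\<^sup>n W\<^sup>(\<^sup>q\<^sup>)\<close> with the \<open>W\<^sup>\<perp>\<close>-translation invariant vectors needs
  \<open>W\<^sup>\<perp>\<^sup>\<perp> = W\<close>, which follows from \<open>|U| |U\<^sup>\<perp>| = p\<^sup>n\<close> by orthogonality of characters;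
  only \<open>1 < p\<close> is used, not primality.
\<close>

section \<open>Vectors over \<open>\<int>\<^sub>p\<close>\<close>

lemma Zpn_lt: "v \<in> Zpn p n \<Longrightarrow> 0 < p \<Longrightarrow> v i < p"
  by (cases "i < n") (auto simp: Zpn_def)

lemma Zpn_le: "v \<in> Zpn p n \<Longrightarrow> v i \<le> p"
  by (cases "i < n") (auto simp: Zpn_def intro: less_imp_le)

lemma Zpn_eq_image:
  "Zpn p n = (\<lambda>f i. if i < n then f i else 0) ` (PiE {..<n} (\<lambda>_. {..<p}))"
proof (intro equalityI subsetI)
  fix v assume v: "v \<in> Zpn p n"
  have "restrict v {..<n} \<in> PiE {..<n} (\<lambda>_. {..<p})" using v by (auto simp: Zpn_def)
  moreover have "v = (\<lambda>i. if i < n then restrict v {..<n} i else 0)"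
    using v by (auto simp: Zpn_def)
  ultimately show "v \<in> (\<lambda>f i. if i < n then f i else 0) ` (PiE {..<n} (\<lambda>_. {..<p}))" by blast
qed (auto simp: Zpn_def PiE_def Pi_def)

lemma finite_Zpn [simp]: "finite (Zpn p n)"
  by (simp add: Zpn_eq_image finite_PiE)

lemma card_Zpn: "card (Zpn p n) = p ^ n"
proof -
  have "inj_on (\<lambda>f i. if i < n then f i else 0) (PiE {..<n} (\<lambda>_. {..<p}))"
    by (rule inj_onI) (metis (no_types, lifting) PiE_ext lessThan_iff)
  then show ?thesis by (simp add: Zpn_eq_image card_image card_PiE)
qed

lemma zero_in_Zpn [simp]: "0 < p \<Longrightarrow> (\<lambda>i. 0) \<in> Zpn p n"
  by (simp add: Zpn_def)

lemma vadd_in_Zpn [simp]: "0 < p \<Longrightarrow> u \<in> Zpn p n \<Longrightarrow> v \<in> Zpn p n \<Longrightarrow> vadd p u v \<in> Zpn p n"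
  by (auto simp: Zpn_def vadd_def)

lemma vsub_in_Zpn [simp]: "0 < p \<Longrightarrow> u \<in> Zpn p n \<Longrightarrow> v \<in> Zpn p n \<Longrightarrow> vsub p u v \<in> Zpn p n"
  by (auto simp: Zpn_def vsub_def)

lemma smul_in_Zpn [simp]: "0 < p \<Longrightarrow> u \<in> Zpn p n \<Longrightarrow> smul p a u \<in> Zpn p n"
  by (auto simp: Zpn_def smul_def)

lemma int_vadd: "int (vadd p u v i) = (int (u i) + int (v i)) mod int p"
  by (simp add: vadd_def zmod_int)

lemma int_vsub: "v i \<le> p \<Longrightarrow> int (vsub p u v i) = (int (u i) - int (v i)) mod int p"
proof -
  assume "v i \<le> p"
  then have "int (u i + p - v i) = int (u i) - int (v i) + int p" by simp
  then show ?thesis by (simp add: vsub_def zmod_int)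
qed

lemma vadd_lt: "0 < p \<Longrightarrow> vadd p u v i < p"
  by (simp add: vadd_def)

lemma vsub_lt: "0 < p \<Longrightarrow> vsub p u v i < p"
  by (simp add: vsub_def)

lemma int_smul: "int (smul p a u i) = (int a * int (u i)) mod int p"
  by (simp add: smul_def zmod_int)

lemma int_dot: "int (dot p n a u) = (\<Sum>i<n. int (a i) * int (u i)) mod int p"
  by (simp add: dot_def zmod_int)

lemma Zpn_eqI:
  assumes "u \<in> Zpn p n" "v \<in> Zpn p n" "0 < p"
    and "\<And>i. int (u i) mod int p = int (v i) mod int p"
  shows "u = v"
proof
  fix i
  have "int (u i) = int (v i)"
    using assms(4)[of i] Zpn_lt[OF assms(1,3), of i] Zpn_lt[OF assms(2,3), of i] by simp
  then show "u i = v i" by simp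
qed

text \<open>Identities between vectors of \<open>\<int>\<^sub>p\<^sup>n\<close> are checked coordinatewise on integer representatives
  modulo \<open>p\<close>.\<close>

lemmas Zpn_int_simps = int_vadd int_vsub vadd_lt vsub_lt Zpn_le less_imp_le mod_simps

context
  fixes p n :: nat
  assumes p: "0 < p"
begin

lemma vsub_vadd_cancel: "b \<in> Zpn p n \<Longrightarrow> u \<in> Zpn p n \<Longrightarrow> vsub p (vadd p b u) u = b"
  by (rule Zpn_eqI[where n=n, OF _ _ p]) (simp_all add: p Zpn_int_simps)

lemma vadd_vsub_cancel: "b \<in> Zpn p n \<Longrightarrow> u \<in> Zpn p n \<Longrightarrow> vadd p (vsub p b u) u = b"
  by (rule Zpn_eqI[where n=n, OF _ _ p]) (simp_all add: p Zpn_int_simps)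

lemma vsub_vsub_cancel: "e \<in> Zpn p n \<Longrightarrow> a \<in> Zpn p n \<Longrightarrow> vsub p e (vsub p e a) = a"
  by (rule Zpn_eqI[where n=n, OF _ _ p]) (simp_all add: p Zpn_int_simps)

lemma vsub_vsub_commute:
  "y \<in> Zpn p n \<Longrightarrow> a \<in> Zpn p n \<Longrightarrow> w \<in> Zpn p n \<Longrightarrow> vsub p (vsub p y a) w = vsub p (vsub p y w) a"
  by (rule Zpn_eqI[where n=n, OF _ _ p]) (simp_all add: p Zpn_int_simps algebra_simps)

lemma vsub_vadd_vadd:
  "y \<in> Zpn p n \<Longrightarrow> b \<in> Zpn p n \<Longrightarrow> c \<in> Zpn p n \<Longrightarrow> vsub p (vadd p y c) (vadd p b c) = vsub p y b"
  by (rule Zpn_eqI[where n=n, OF _ _ p]) (simp_all add: p Zpn_int_simps)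

lemma vadd_vsub_vsub:
  "y \<in> Zpn p n \<Longrightarrow> a \<in> Zpn p n \<Longrightarrow> b \<in> Zpn p n \<Longrightarrow> vadd p (vsub p (vsub p y a) b) a = vsub p y b"
  by (rule Zpn_eqI[where n=n, OF _ _ p]) (simp_all add: p Zpn_int_simps)

lemma vadd_vsub_vsub_swap:
  "y \<in> Zpn p n \<Longrightarrow> a \<in> Zpn p n \<Longrightarrow> w \<in> Zpn p n \<Longrightarrow> vadd p w (vsub p (vsub p y w) a) = vsub p y a"
  by (rule Zpn_eqI[where n=n, OF _ _ p]) (simp_all add: p Zpn_int_simps)

lemma vsub_eq_0_iff:
  assumes "y \<in> Zpn p n" "y' \<in> Zpn p n"
  shows "vsub p y y' = (\<lambda>i. 0) \<longleftrightarrow> y = y'"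
proof
  assume "vsub p y y' = (\<lambda>i. 0)"
  then have "vadd p (\<lambda>i. 0) y' = y"
    using vadd_vsub_cancel assms by metis
  then show "y = y'"
    using assms(2) Zpn_lt[OF assms(2) p] by (auto simp: vadd_def)
qed (use assms Zpn_le in \<open>auto simp: vsub_def\<close>)

lemma vsub_eq_vadd_smul: "u \<in> Zpn p n \<Longrightarrow> v \<in> Zpn p n \<Longrightarrow> vsub p u v = vadd p u (smul p (p - 1) v)"
proof (rule Zpn_eqI[where n=n, OF _ _ p])
  fix i assume "v \<in> Zpn p n"
  have "int (u i) - int (v i) = int (u i) + int (p - 1) * int (v i) + (- int (v i)) * int p"
    using p by (simp add: of_nat_diff algebra_simps)
  then have "(int (u i) - int (v i)) mod int p = (int (u i) + int (p - 1) * int (v i)) mod int p"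
    by (metis mod_mult_self1)
  then show "int (vsub p u v i) mod int p = int (vadd p u (smul p (p - 1) v) i) mod int p"
    using \<open>v \<in> Zpn p n\<close> by (simp add: int_vsub int_vadd int_smul Zpn_le mod_simps)
qed (simp_all add: p)

end

section \<open>Characters\<close>

lemma dot_sym: "dot p n a u = dot p n u a"
  by (simp add: dot_def mult.commute)

lemma dot_lt: "0 < p \<Longrightarrow> dot p n a u < p"
  by (simp add: dot_def)

lemma dot_zero_right [simp]: "dot p n a (\<lambda>i. 0) = 0"
  by (simp add: dot_def)

lemma dot_zero_left [simp]: "dot p n (\<lambda>i. 0) a = 0"
  by (simp add: dot_def)

lemma sum_mod_cong:
  fixes g h :: "'a \<Rightarrow> int"
  assumes "\<And>i. i \<in> A \<Longrightarrow> g i mod m = h i mod m"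
  shows "(\<Sum>i\<in>A. g i) mod m = (\<Sum>i\<in>A. h i) mod m"
  by (metis (mono_tags, lifting) assms mod_sum_eq sum.cong)

lemma dot_vadd: "dot p n a (vadd p u v) = (dot p n a u + dot p n a v) mod p"
proof -
  have "int (dot p n a (vadd p u v)) = (\<Sum>i<n. int (a i) * (int (u i) + int (v i))) mod int p"
    by (simp add: int_dot int_vadd) (rule sum_mod_cong, simp add: mod_simps)
  also have "\<dots> = int ((dot p n a u + dot p n a v) mod p)"
    by (simp add: int_dot zmod_int mod_simps algebra_simps sum.distrib)
  finally show ?thesis by simp
qed

lemma dot_vsub:
  assumes "\<forall>i. v i \<le> p"
  shows "(dot p n a (vsub p u v) + dot p n a v) mod p = dot p n a u"
proof -
  have "(\<Sum>i<n. int (a i) * ((int (u i) - int (v i)) mod int p)) mod int p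
      = (\<Sum>i<n. int (a i) * (int (u i) - int (v i))) mod int p"
    by (rule sum_mod_cong) (simp add: mod_simps)
  then have "int ((dot p n a (vsub p u v) + dot p n a v) mod p)
      = ((\<Sum>i<n. int (a i) * (int (u i) - int (v i))) + (\<Sum>i<n. int (a i) * int (v i))) mod int p"
    using assms by (simp add: int_dot int_vsub zmod_int mod_simps)
  also have "\<dots> = int (dot p n a u)"
    by (simp add: int_dot algebra_simps sum_subtractf)
  finally show ?thesis by simp
qed

lemma dot_smul: "dot p n a (smul p c v) = (c * dot p n a v) mod p"
proof -
  have "int (dot p n a (smul p c v)) = (\<Sum>i<n. int c * (int (a i) * int (v i))) mod int p"
    by (simp add: int_dot int_smul) (rule sum_mod_cong, simp add: mod_simps algebra_simps)
  also have "\<dots> = int ((c * dot p n a v) mod p)"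
    by (simp add: int_dot zmod_int mod_simps sum_distrib_left[symmetric])
  finally show ?thesis by simp
qed

lemma omega_0 [simp]: "omega p 0 = 1"
  by (simp add: omega_def)

lemma omega_add: "omega p (a + b) = omega p a * omega p b"
  by (simp add: omega_def cis_mult add_divide_distrib distrib_left)

lemma omega_mod: assumes "0 < p" shows "omega p (k mod p) = omega p k"
proof -
  have "2 * pi * real (p * (k div p)) / real p = 2 * pi * real (k div p)"
    using assms by simp
  then have "omega p (p * (k div p)) = 1"
    by (simp add: omega_def)
  then show ?thesis
    by (metis mod_mult_div_eq omega_add mult.commute mult_1_right)
qed

lemma omega_neq_1: assumes "0 < k" "k < p" shows "omega p k \<noteq> 1"
proof
  assume "omega p k = 1"
  then have "cos (2 * pi * real k / real p) = 1"
    unfolding omega_def by (metis Re_complex_of_real cis.sel(1) one_complex.sel(1))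
  then obtain m :: int where "2 * pi * real k / real p = m * 2 * pi"
    by (auto simp: cos_one_2pi_int)
  then have "real k = m * real p"
    using assms by (simp add: field_simps)
  moreover have "0 < real k" "real k < real p"
    using assms by simp_all
  ultimately have "0 < real_of_int m" "real_of_int m < 1"
    by (auto simp: zero_less_mult_iff mult_less_cancel_right2)
  then have "0 < m" "m < 1"
    by simp_all
  then show False by simp
qed

definition chi :: "nat \<Rightarrow> nat \<Rightarrow> (nat \<Rightarrow> nat) \<Rightarrow> (nat \<Rightarrow> nat) \<Rightarrow> complex" where
  "chi p n a u = omega p (dot p n a u)"

lemma chi_sym: "chi p n a u = chi p n u a"
  by (simp add: chi_def dot_sym)

lemma chi_vadd: "0 < p \<Longrightarrow> chi p n a (vadd p u v) = chi p n a u * chi p n a v"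
  by (simp add: chi_def dot_vadd omega_mod omega_add)

lemma chi_vadd_left: "0 < p \<Longrightarrow> chi p n (vadd p u v) a = chi p n u a * chi p n v a"
  by (metis chi_sym chi_vadd)

lemma chi_mult_cnj [simp]: "chi p n a u * cnj (chi p n a u) = 1"
  by (simp add: chi_def omega_def cis_cnj cis_mult)

lemma chi_vsub:
  assumes "0 < p" "v \<in> Zpn p n"
  shows "chi p n a (vsub p u v) = chi p n a u * cnj (chi p n a v)"
proof -
  have "chi p n a (vsub p u v) * chi p n a v = chi p n a u"
    using dot_vsub[of v p n a u] assms by (metis Zpn_le chi_def omega_add omega_mod)
  then have "chi p n a (vsub p u v) * (chi p n a v * cnj (chi p n a v)) = chi p n a u * cnj (chi p n a v)"
    by (metis mult.assoc)
  then show ?thesis by simp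
qed

lemma chi_eq_1_iff: "0 < p \<Longrightarrow> chi p n a u = 1 \<longleftrightarrow> dot p n a u = 0"
  using omega_neq_1[OF _ dot_lt] by (auto simp: chi_def omega_def)

section \<open>Linear codes and duality\<close>

lemma linear_code_subset: "linear_code p n U \<Longrightarrow> U \<subseteq> Zpn p n"
  by (simp add: linear_code_def)

lemma linear_code_zero: "linear_code p n U \<Longrightarrow> (\<lambda>i. 0) \<in> U"
  by (simp add: linear_code_def)

lemma linear_code_vadd: "linear_code p n U \<Longrightarrow> u \<in> U \<Longrightarrow> v \<in> U \<Longrightarrow> vadd p u v \<in> U"
  by (simp add: linear_code_def)

lemma linear_code_smul:
  assumes "linear_code p n U" "0 < p" "u \<in> U"
  shows "smul p a u \<in> U"
proof -
  have "smul p (a mod p) u \<in> U"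
    using assms by (simp add: linear_code_def)
  moreover have "smul p (a mod p) u = smul p a u"
    by (simp add: smul_def mod_simps)
  ultimately show ?thesis by simp
qed

lemma linear_code_vsub:
  assumes U: "linear_code p n U" and p: "0 < p" and "u \<in> U" "v \<in> U"
  shows "vsub p u v \<in> U"
proof -
  have "vsub p u v = vadd p u (smul p (p - 1) v)"
    using assms linear_code_subset[OF U] by (intro vsub_eq_vadd_smul) auto
  also have "\<dots> \<in> U"
    using assms by (intro linear_code_vadd linear_code_smul)
  finally show ?thesis .
qed

lemma finite_linear_code: "linear_code p n U \<Longrightarrow> finite U"
  using finite_subset[OF linear_code_subset finite_Zpn] .

lemma card_linear_code_pos: "linear_code p n U \<Longrightarrow> 0 < card U"
  using finite_linear_code[of p n U] linear_code_zero[of p n U] by (auto simp: card_gt_0_iff)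

lemma linear_code_Zpn: "0 < p \<Longrightarrow> linear_code p n (Zpn p n)"
  by (simp add: linear_code_def)

lemma sum_linear_code_translate:
  assumes U: "linear_code p n U" and p: "0 < p" and c: "c \<in> U"
  shows "(\<Sum>b\<in>U. f (vadd p b c)) = (\<Sum>b\<in>U. f b)"
proof (rule sum.reindex_bij_betw, rule bij_betwI[where g="\<lambda>b. vsub p b c"])
  have Z: "c \<in> Zpn p n" "\<And>b. b \<in> U \<Longrightarrow> b \<in> Zpn p n"
    using c linear_code_subset[OF U] by auto
  show "\<And>b. b \<in> U \<Longrightarrow> vsub p (vadd p b c) c = b"
    using vsub_vadd_cancel[OF p Z(2) Z(1)] .
  show "\<And>b. b \<in> U \<Longrightarrow> vadd p (vsub p b c) c = b"
    using vadd_vsub_cancel[OF p Z(2) Z(1)] .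
qed (use assms linear_code_vadd linear_code_vsub in blast)+

lemma dual_code_subset: "dual_code p n U \<subseteq> Zpn p n"
  by (auto simp: dual_code_def)

lemma dual_code_antimono: "U1 \<subseteq> U2 \<Longrightarrow> dual_code p n U2 \<subseteq> dual_code p n U1"
  unfolding dual_code_def by blast

lemma linear_code_dual: assumes p: "0 < p" shows "linear_code p n (dual_code p n U)"
  unfolding linear_code_def
proof (intro conjI ballI allI impI)
  fix u v assume "u \<in> dual_code p n U" "v \<in> dual_code p n U"
  then show "vadd p u v \<in> dual_code p n U"
    using p by (auto simp: dual_code_def dot_sym[of p n "vadd p u v"] dot_vadd dot_sym[of p n u] dot_sym[of p n v])
next
  fix a u assume "u \<in> dual_code p n U"
  then show "smul p a u \<in> dual_code p n U"
    using p by (auto simp: dual_code_def dot_sym[of p n "smul p a u"] dot_smul dot_sym[of p n u])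
qed (use p in \<open>auto simp: dual_code_def\<close>)

lemma sum_chi_linear_code:
  assumes U: "linear_code p n U" and p: "0 < p"
  shows "(\<Sum>a\<in>U. chi p n a y) = (if \<forall>a\<in>U. dot p n a y = 0 then of_nat (card U) else 0)"
proof (cases "\<forall>a\<in>U. dot p n a y = 0")
  case True
  then show ?thesis by (simp add: chi_def)
next
  case False
  then obtain c where c: "c \<in> U" "dot p n c y \<noteq> 0" by blast
  have "(\<Sum>a\<in>U. chi p n a y) = (\<Sum>a\<in>U. chi p n (vadd p a c) y)"
    using sum_linear_code_translate[OF U p c(1), of "\<lambda>a. chi p n a y"] by simp
  also have "\<dots> = (\<Sum>a\<in>U. chi p n a y) * chi p n c y"
    by (simp add: chi_vadd_left[OF p] sum_distrib_right)
  finally have "(\<Sum>a\<in>U. chi p n a y) * (1 - chi p n c y) = 0"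
    by (simp add: algebra_simps)
  then show ?thesis
    using False c(2) chi_eq_1_iff[OF p] by auto
qed

lemma Zpn_orthogonal_zero:
  assumes p: "1 < p" and y: "y \<in> Zpn p n" and orth: "\<forall>a\<in>Zpn p n. dot p n a y = 0"
  shows "y = (\<lambda>i. 0)"
proof
  fix i show "y i = 0"
  proof (cases "i < n")
    case True
    define e where "e = (\<lambda>j. if j = i then 1 else (0::nat))"
    have "e \<in> Zpn p n"
      using p True by (auto simp: Zpn_def e_def)
    moreover have "dot p n e y = y i"
    proof -
      have "(\<Sum>j<n. e j * y j) = (\<Sum>j<n. if j = i then y i else 0)"
        by (rule sum.cong) (auto simp: e_def)
      then show ?thesis
        using True Zpn_lt[OF y] p by (simp add: dot_def)
    qed
    ultimately show ?thesis using orth by simp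
  next
    case False then show ?thesis using y by (simp add: Zpn_def)
  qed
qed

lemma sum_chi_Zpn:
  assumes p: "1 < p" and y: "y \<in> Zpn p n"
  shows "(\<Sum>a\<in>Zpn p n. chi p n a y) = (if y = (\<lambda>i. 0) then of_nat (p ^ n) else 0)"
proof -
  have "(\<forall>a\<in>Zpn p n. dot p n a y = 0) \<longleftrightarrow> y = (\<lambda>i. 0)"
    using Zpn_orthogonal_zero[OF p y] by auto
  then show ?thesis
    using sum_chi_linear_code[OF linear_code_Zpn, of p n y] p by (simp add: card_Zpn)
qed

lemma card_mult_card_dual_code:
  assumes U: "linear_code p n U" and p: "1 < p"
  shows "card U * card (dual_code p n U) = p ^ n"
proof -
  let ?S = "\<Sum>a\<in>Zpn p n. \<Sum>u\<in>U. chi p n u a"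
  have "?S = (\<Sum>a\<in>Zpn p n. if a \<in> dual_code p n U then of_nat (card U) else 0)"
    using sum_chi_linear_code[OF U] p by (intro sum.cong) (auto simp: dual_code_def dot_sym)
  also have "\<dots> = of_nat (card (dual_code p n U) * card U)"
    using dual_code_subset[of p n U] by (simp add: sum.If_cases Int_absorb1)
  finally have count_dual: "?S = of_nat (card (dual_code p n U) * card U)" .
  have "?S = (\<Sum>u\<in>U. \<Sum>a\<in>Zpn p n. chi p n a u)"
    by (subst sum.swap) (simp add: chi_sym)
  also have "\<dots> = (\<Sum>u\<in>U. if u = (\<lambda>i. 0) then of_nat (p ^ n) else 0)"
    using sum_chi_Zpn[OF p] linear_code_subset[OF U] by (intro sum.cong) auto
  also have "\<dots> = of_nat (p ^ n)"
    using linear_code_zero[OF U] finite_linear_code[OF U] by simp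
  finally have "of_nat (card (dual_code p n U) * card U) = (of_nat (p ^ n) :: complex)"
    using count_dual by simp
  then show ?thesis
    by (simp only: of_nat_eq_iff mult.commute)
qed

lemma dual_dual_code:
  assumes U: "linear_code p n U" and p: "1 < p"
  shows "dual_code p n (dual_code p n U) = U"
proof -
  have D: "linear_code p n (dual_code p n U)"
    using linear_code_dual p by simp
  have "U \<subseteq> dual_code p n (dual_code p n U)"
    using linear_code_subset[OF U] by (auto simp: dual_code_def dot_sym)
  moreover have "card (dual_code p n (dual_code p n U)) = card U"
    using card_mult_card_dual_code[OF U p] card_mult_card_dual_code[OF D p] card_linear_code_pos[OF D]
    by (metis mult.commute mult_right_cancel not_less0 neq0_conv)
  ultimately show ?thesis
    using finite_linear_code[OF linear_code_dual[of p n "dual_code p n U"]] p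
    by (metis card_subset_eq less_trans zero_less_one)
qed

lemma dual_code_separates:
  assumes "linear_code p n U" "1 < p" "x \<in> Zpn p n" "x \<notin> U"
  shows "\<exists>a\<in>dual_code p n U. dot p n a x \<noteq> 0"
proof -
  have "x \<notin> dual_code p n (dual_code p n U)"
    using assms dual_dual_code by simp
  then obtain a where "a \<in> dual_code p n U" "dot p n x a \<noteq> 0"
    using assms(3) unfolding dual_code_def[of p n "dual_code p n U"] by blast
  then show ?thesis
    by (metis dot_sym)
qed

section \<open>CSS codes and their projector\<close>

lemma qcode_iff:
  assumes "finite U"
  shows "\<psi> \<in> qcode p n U \<longleftrightarrow> (\<forall>x. x \<notin> U \<longrightarrow> \<psi> x = 0)"
proof
  assume "\<psi> \<in> qcode p n U"
  then show "\<forall>x. x \<notin> U \<longrightarrow> \<psi> x = 0"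
    by (auto simp: qcode_def ket_def intro!: sum.neutral)
next
  assume vanish: "\<forall>x. x \<notin> U \<longrightarrow> \<psi> x = 0"
  have "\<psi> x = (\<Sum>u\<in>U. \<psi> u * ket u x)" for x
  proof -
    have "(\<Sum>u\<in>U. \<psi> u * ket u x) = (\<Sum>u\<in>U. if u = x then \<psi> x else 0)"
      by (rule sum.cong) (auto simp: ket_def)
    then show ?thesis
      using assms vanish by auto
  qed
  then show "\<psi> \<in> qcode p n U"
    unfolding qcode_def by blast
qed

definition shift_invariant :: "nat \<Rightarrow> nat \<Rightarrow> (nat \<Rightarrow> nat) set \<Rightarrow> qvec \<Rightarrow> bool" where
  "shift_invariant p n D \<psi> \<longleftrightarrow> (\<forall>y\<in>Zpn p n. \<forall>b\<in>D. \<psi> (vadd p y b) = \<psi> y)"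

definition iqft :: "nat \<Rightarrow> nat \<Rightarrow> qvec \<Rightarrow> qvec" where
  "iqft p n \<psi> = (\<lambda>x. if x \<in> Zpn p n then
      (1 / complex_of_real (sqrt (real p))) ^ n * (\<Sum>y\<in>Zpn p n. cnj (chi p n x y) * \<psi> y) else 0)"

lemma qft_chi: "qft p n g = (\<lambda>y. if y \<in> Zpn p n then
      (1 / complex_of_real (sqrt (real p))) ^ n * (\<Sum>x\<in>Zpn p n. chi p n x y * g x) else 0)"
  by (simp only: qft_def chi_def)

lemma sum_chi_mult_cnj:
  assumes p: "1 < p" and "y \<in> Zpn p n" "y' \<in> Zpn p n"
  shows "(\<Sum>x\<in>Zpn p n. chi p n x y * cnj (chi p n x y')) = (if y' = y then of_nat (p ^ n) else 0)"
proof -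
  have "(\<Sum>x\<in>Zpn p n. chi p n x y * cnj (chi p n x y')) = (\<Sum>x\<in>Zpn p n. chi p n x (vsub p y y'))"
    using assms by (simp add: chi_vsub)
  also have "\<dots> = (if y' = y then of_nat (p ^ n) else 0)"
    using assms p sum_chi_Zpn[OF p, of "vsub p y y'"] by (auto simp: vsub_eq_0_iff)
  finally show ?thesis .
qed

lemma qft_scaling_cancel:
  assumes "0 < p"
  shows "(1 / complex_of_real (sqrt (real p))) ^ n * (1 / complex_of_real (sqrt (real p))) ^ n * of_nat (p ^ n) = 1"
proof -
  have "(1 / complex_of_real (sqrt (real p))) * (1 / complex_of_real (sqrt (real p))) * of_nat p = 1"
    using assms by (simp flip: of_real_mult)
  then show ?thesis
    by (metis power_mult_distrib of_nat_power power_one)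
qed

lemma qft_iqft:
  assumes p: "1 < p" and \<psi>: "in_space p n \<psi>"
  shows "qft p n (iqft p n \<psi>) = \<psi>"
proof
  fix y
  let ?c = "(1 / complex_of_real (sqrt (real p))) ^ n"
  show "qft p n (iqft p n \<psi>) y = \<psi> y"
  proof (cases "y \<in> Zpn p n")
    case False
    then show ?thesis using \<psi> by (simp add: qft_chi in_space_def)
  next
    case y: True
    have "qft p n (iqft p n \<psi>) y
        = ?c * (\<Sum>x\<in>Zpn p n. chi p n x y * (?c * (\<Sum>y'\<in>Zpn p n. cnj (chi p n x y') * \<psi> y')))"
      using y by (simp add: qft_chi iqft_def)
    also have "\<dots> = ?c * ?c * (\<Sum>x\<in>Zpn p n. \<Sum>y'\<in>Zpn p n. \<psi> y' * (chi p n x y * cnj (chi p n x y')))"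
      by (simp add: sum_distrib_left mult_ac)
    also have "\<dots> = ?c * ?c * (\<Sum>y'\<in>Zpn p n. \<psi> y' * (\<Sum>x\<in>Zpn p n. chi p n x y * cnj (chi p n x y')))"
      by (subst sum.swap) (simp add: sum_distrib_left)
    also have "\<dots> = ?c * ?c * (\<Sum>y'\<in>Zpn p n. if y' = y then \<psi> y * of_nat (p ^ n) else 0)"
      using y by (intro arg_cong[where f="\<lambda>s. ?c * ?c * s"] sum.cong refl) (simp add: sum_chi_mult_cnj[OF p])
    also have "\<dots> = ?c * ?c * (\<psi> y * of_nat (p ^ n))"
      using y by simp
    also have "\<dots> = \<psi> y"
      using qft_scaling_cancel[of p n] p by (simp add: mult_ac)
    finally show ?thesis .
  qed
qed

lemma iqft_vanishes_off_code:
  assumes p: "1 < p" and W: "linear_code p n W"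
    and inv: "shift_invariant p n (dual_code p n W) \<psi>" and x: "x \<notin> W"
  shows "iqft p n \<psi> x = 0"
proof (cases "x \<in> Zpn p n")
  case False then show ?thesis by (simp add: iqft_def)
next
  case xZ: True
  have p0: "0 < p" using p by simp
  obtain b where b: "b \<in> dual_code p n W" "dot p n b x \<noteq> 0"
    using dual_code_separates[OF W p xZ x] by blast
  have bZ: "b \<in> Zpn p n" using b(1) dual_code_subset by blast
  let ?S = "\<Sum>y\<in>Zpn p n. cnj (chi p n x y) * \<psi> y"
  have "?S = (\<Sum>y\<in>Zpn p n. cnj (chi p n x (vadd p y b)) * \<psi> (vadd p y b))"
    using sum_linear_code_translate[OF linear_code_Zpn[OF p0] p0 bZ, of "\<lambda>y. cnj (chi p n x y) * \<psi> y"]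
    by simp
  also have "\<dots> = cnj (chi p n x b) * ?S"
    using inv b(1) by (simp add: shift_invariant_def chi_vadd[OF p0] sum_distrib_left mult_ac)
  finally have "?S * (1 - cnj (chi p n x b)) = 0"
    by (simp add: algebra_simps)
  moreover have "cnj (chi p n x b) \<noteq> 1"
    using chi_eq_1_iff[OF p0, of n x b] b(2) dot_sym[of p n x b]
    by (metis complex_cnj_cnj complex_cnj_one)
  ultimately show ?thesis by (simp add: iqft_def)
qed

lemma shift_invariant_qft_qcode:
  assumes p: "0 < p" and W: "linear_code p n W" and g: "g \<in> qcode p n W"
  shows "shift_invariant p n (dual_code p n W) (qft p n g)"
  unfolding shift_invariant_def
proof (intro ballI)
  fix y b assume y: "y \<in> Zpn p n" and b: "b \<in> dual_code p n W"
  have g0: "g x = 0" if "x \<notin> W" for x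
    using g that qcode_iff[OF finite_linear_code[OF W]] by blast
  have term_eq: "chi p n x (vadd p y b) * g x = chi p n x y * g x" for x
  proof (cases "x \<in> W")
    case True
    then have "dot p n x b = 0" using b dot_sym[of p n x b] by (simp add: dual_code_def)
    then show ?thesis by (simp add: chi_vadd[OF p] chi_def[of p n x b])
  qed (simp add: g0)
  then show "qft p n g (vadd p y b) = qft p n g y"
    using y b p dual_code_subset[of p n W] by (auto simp: qft_chi term_eq)
qed

lemma qft_image_qcode_iff:
  assumes p: "1 < p" and W: "linear_code p n W"
  shows "\<psi> \<in> qft p n ` qcode p n W \<longleftrightarrow> in_space p n \<psi> \<and> shift_invariant p n (dual_code p n W) \<psi>"
proof
  assume "\<psi> \<in> qft p n ` qcode p n W"
  then show "in_space p n \<psi> \<and> shift_invariant p n (dual_code p n W) \<psi>"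
    using shift_invariant_qft_qcode[OF _ W] p by (auto simp: in_space_def qft_def)
next
  assume "in_space p n \<psi> \<and> shift_invariant p n (dual_code p n W) \<psi>"
  then have "iqft p n \<psi> \<in> qcode p n W" "\<psi> = qft p n (iqft p n \<psi>)"
    using iqft_vanishes_off_code[OF p W] qcode_iff[OF finite_linear_code[OF W]] qft_iqft[OF p]
    by auto
  then show "\<psi> \<in> qft p n ` qcode p n W" by blast
qed

lemma css_code_iff:
  assumes p: "1 < p" and V: "linear_code p n V" and W: "linear_code p n W"
  shows "\<zeta> \<in> css_code p n V W \<longleftrightarrow>
    (\<forall>x. x \<notin> V \<longrightarrow> \<zeta> x = 0) \<and> shift_invariant p n (dual_code p n W) \<zeta>"
  using linear_code_subset[OF V]
  by (auto simp: css_code_def qft_image_qcode_iff[OF p W] qcode_iff[OF finite_linear_code[OF V]] in_space_def)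

definition css_proj :: "nat \<Rightarrow> nat \<Rightarrow> (nat \<Rightarrow> nat) set \<Rightarrow> (nat \<Rightarrow> nat) set \<Rightarrow> qvec \<Rightarrow> qvec" where
  "css_proj p n V W \<chi> = (\<lambda>y. if y \<in> V then
      (1 / of_nat (card (dual_code p n W))) * (\<Sum>b\<in>dual_code p n W. \<chi> (vsub p y b)) else 0)"

lemma dual_code_subset_of_dual_subset:
  assumes p: "1 < p" and V: "linear_code p n V" and VW: "dual_code p n V \<subseteq> W"
  shows "dual_code p n W \<subseteq> V"
  using dual_code_antimono[OF VW, of p n] dual_dual_code[OF V p] by simp

lemma css_proj_in_css_code:
  assumes p: "1 < p" and V: "linear_code p n V" and W: "linear_code p n W"
    and VW: "dual_code p n V \<subseteq> W"
  shows "css_proj p n V W \<chi> \<in> css_code p n V W"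
  unfolding css_code_iff[OF p V W] shift_invariant_def
proof (intro conjI allI impI ballI)
  have p0: "0 < p" using p by simp
  let ?D = "dual_code p n W"
  fix y c assume y: "y \<in> Zpn p n" and c: "c \<in> ?D"
  have cZ: "c \<in> Zpn p n" and cV: "c \<in> V"
    using c dual_code_subset dual_code_subset_of_dual_subset[OF p V VW] by blast+
  have "vadd p y c \<in> V \<longleftrightarrow> y \<in> V"
    using linear_code_vsub[OF V p0 _ cV] linear_code_vadd[OF V _ cV] vsub_vadd_cancel[OF p0 y cZ] by metis
  moreover have "(\<Sum>b\<in>?D. \<chi> (vsub p (vadd p y c) b)) = (\<Sum>b\<in>?D. \<chi> (vsub p y b))"
  proof -
    have "(\<Sum>b\<in>?D. \<chi> (vsub p (vadd p y c) b)) = (\<Sum>b\<in>?D. \<chi> (vsub p (vadd p y c) (vadd p b c)))"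
      using sum_linear_code_translate[OF linear_code_dual[OF p0] p0 c, of "\<lambda>b. \<chi> (vsub p (vadd p y c) b)"]
      by simp
    also have "\<dots> = (\<Sum>b\<in>?D. \<chi> (vsub p y b))"
      using y cZ dual_code_subset[of p n W] by (intro sum.cong refl) (auto simp: vsub_vadd_vadd[OF p0])
    finally show ?thesis .
  qed
  ultimately show "css_proj p n V W \<chi> (vadd p y c) = css_proj p n V W \<chi> y"
    by (simp add: css_proj_def)
qed (simp add: css_proj_def)

lemma cinner_diff_right: "cinner p n \<chi> (\<lambda>x. f x - g x) = cinner p n \<chi> f - cinner p n \<chi> g"
  by (simp add: cinner_def algebra_simps sum_subtractf)

lemma cinner_diff_left: "cinner p n (\<lambda>x. f x - g x) \<chi> = cinner p n f \<chi> - cinner p n g \<chi>"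
  by (simp add: cinner_def algebra_simps sum_subtractf)

lemma cinner_commute: "cinner p n g f = cnj (cinner p n f g)"
  by (simp add: cinner_def mult.commute)

lemma cinner_self: "cinner p n f f = complex_of_real (\<Sum>x\<in>Zpn p n. (cmod (f x))\<^sup>2)"
  by (simp only: cinner_def of_real_sum complex_norm_square mult.commute)

lemma cinner_self_eq_0_iff: "cinner p n f f = 0 \<longleftrightarrow> (\<forall>x\<in>Zpn p n. f x = 0)"
proof -
  have "cinner p n f f = 0 \<longleftrightarrow> (\<Sum>x\<in>Zpn p n. (cmod (f x))\<^sup>2) = 0"
    by (simp only: cinner_self of_real_eq_0_iff)
  then show ?thesis
    by (simp add: sum_nonneg_eq_0_iff)
qed

lemma cinner_css_proj:
  assumes p: "1 < p" and V: "linear_code p n V" and W: "linear_code p n W"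
    and \<zeta>: "\<zeta> \<in> css_code p n V W"
  shows "cinner p n \<zeta> (css_proj p n V W \<chi>) = cinner p n \<zeta> \<chi>"
proof -
  have p0: "0 < p" using p by simp
  let ?D = "dual_code p n W"
  have \<zeta>_V: "\<And>x. x \<notin> V \<Longrightarrow> \<zeta> x = 0" and \<zeta>_inv: "shift_invariant p n ?D \<zeta>"
    using \<zeta> css_code_iff[OF p V W] by auto
  have shifted: "(\<Sum>y\<in>Zpn p n. cnj (\<zeta> y) * \<chi> (vsub p y b)) = cinner p n \<zeta> \<chi>" if b: "b \<in> ?D" for b
  proof -
    have bZ: "b \<in> Zpn p n" using b dual_code_subset by blast
    have "(\<Sum>y\<in>Zpn p n. cnj (\<zeta> y) * \<chi> (vsub p y b))
        = (\<Sum>y\<in>Zpn p n. cnj (\<zeta> (vadd p y b)) * \<chi> (vsub p (vadd p y b) b))"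
      using sum_linear_code_translate[OF linear_code_Zpn[OF p0] p0 bZ, of "\<lambda>y. cnj (\<zeta> y) * \<chi> (vsub p y b)"]
      by simp
    also have "\<dots> = cinner p n \<zeta> \<chi>"
      using \<zeta>_inv b bZ by (simp add: cinner_def shift_invariant_def vsub_vadd_cancel[OF p0])
    finally show ?thesis .
  qed
  have "cinner p n \<zeta> (css_proj p n V W \<chi>)
      = (\<Sum>y\<in>Zpn p n. cnj (\<zeta> y) * ((1 / of_nat (card ?D)) * (\<Sum>b\<in>?D. \<chi> (vsub p y b))))"
    using \<zeta>_V unfolding cinner_def css_proj_def by (intro sum.cong) auto
  also have "\<dots> = (1 / of_nat (card ?D)) * (\<Sum>b\<in>?D. \<Sum>y\<in>Zpn p n. cnj (\<zeta> y) * \<chi> (vsub p y b))"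
    by (subst sum.swap) (simp add: sum_distrib_left mult_ac)
  also have "\<dots> = cinner p n \<zeta> \<chi>"
    using shifted card_linear_code_pos[OF linear_code_dual[OF p0]] by simp
  finally show ?thesis .
qed

lemma proj_eqI:
  assumes \<phi>: "\<phi> \<in> S" "in_space p n \<phi>" "\<forall>\<zeta>\<in>S. cinner p n \<zeta> (\<lambda>x. \<chi> x - \<phi> x) = 0"
  shows "proj p n S \<chi> = \<phi>"
  unfolding proj_def
proof (rule the_equality)
  show "\<phi> \<in> S \<and> in_space p n \<phi> \<and> (\<forall>\<zeta>\<in>S. cinner p n \<zeta> (\<lambda>x. \<chi> x - \<phi> x) = 0)"
    using \<phi> by blast
  fix \<phi>' assume \<phi>': "\<phi>' \<in> S \<and> in_space p n \<phi>' \<and> (\<forall>\<zeta>\<in>S. cinner p n \<zeta> (\<lambda>x. \<chi> x - \<phi>' x) = 0)"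
  have same: "cinner p n \<zeta> \<phi>' = cinner p n \<zeta> \<phi>" if "\<zeta> \<in> S" for \<zeta>
    using \<phi> \<phi>' that by (simp add: cinner_diff_right)
  have "cinner p n (\<lambda>x. \<phi>' x - \<phi> x) (\<lambda>x. \<phi>' x - \<phi> x) = 0"
    using same[of \<phi>] same[of \<phi>'] \<phi> \<phi>' by (simp add: cinner_diff_left cinner_diff_right)
  then have "\<forall>x\<in>Zpn p n. \<phi>' x = \<phi> x"
    by (simp add: cinner_self_eq_0_iff)
  then show "\<phi>' = \<phi>"
    using \<phi>(2) \<phi>' unfolding in_space_def by (metis ext)
qed

lemma proj_css_code:
  assumes p: "1 < p" and V: "linear_code p n V" and W: "linear_code p n W"
    and VW: "dual_code p n V \<subseteq> W"
  shows "proj p n (css_code p n V W) \<chi> = css_proj p n V W \<chi>"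
proof (rule proj_eqI)
  show "css_proj p n V W \<chi> \<in> css_code p n V W"
    using css_proj_in_css_code[OF assms] .
  show "in_space p n (css_proj p n V W \<chi>)"
    using linear_code_subset[OF V] by (auto simp: in_space_def css_proj_def)
  show "\<forall>\<zeta>\<in>css_code p n V W. cinner p n \<zeta> (\<lambda>x. \<chi> x - css_proj p n V W \<chi> x) = 0"
    using cinner_css_proj[OF p V W] by (simp add: cinner_diff_right)
qed

lemma css_proj_sum:
  "css_proj p n V W (\<lambda>y. \<Sum>i\<in>I. c i * f i y) y0 = (\<Sum>i\<in>I. c i * css_proj p n V W (f i) y0)"
  by (simp add: css_proj_def sum_distrib_left sum.swap[of _ I] mult_ac)

lemma cinner_css_proj_defect:
  fixes \<chi> :: qvec
  assumes p: "1 < p" and V: "linear_code p n V" and W: "linear_code p n W"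
    and VW: "dual_code p n V \<subseteq> W"
  defines "\<pi> \<equiv> css_proj p n V W \<chi>"
  shows "cinner p n \<chi> \<chi> - cinner p n \<chi> \<pi> = cinner p n (\<lambda>x. \<chi> x - \<pi> x) (\<lambda>x. \<chi> x - \<pi> x)"
proof -
  have "cinner p n \<pi> \<chi> = cinner p n \<pi> \<pi>"
    using cinner_css_proj[OF p V W css_proj_in_css_code[OF assms(1-4)], of \<chi>] by (simp add: \<pi>_def)
  moreover have "cinner p n \<chi> \<pi> = cinner p n \<pi> \<pi>"
    using calculation cinner_commute[of p n \<chi> \<pi>] cinner_self[of p n \<pi>] by simp
  ultimately show ?thesis
    by (simp add: cinner_diff_left cinner_diff_right)
qed

lemma code_fidelity_css_code:
  fixes m :: nat
  assumes p: "1 < p" and V: "linear_code p n V" and W: "linear_code p n W"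
    and VW: "dual_code p n V \<subseteq> W"
    and \<rho>: "\<forall>x y. \<rho> x y = (\<Sum>i<m. complex_of_real (pr i) * \<psi> i x * cnj (\<psi> i y))"
  shows "code_fidelity p n (css_code p n V W) \<rho>
    = (\<Sum>i<m. complex_of_real (pr i) * cinner p n (\<psi> i) (css_proj p n V W (\<psi> i)))"
proof -
  have "(\<lambda>y. \<rho> y x) = (\<lambda>y. \<Sum>i<m. (complex_of_real (pr i) * cnj (\<psi> i x)) * \<psi> i y)" for x
    using \<rho> by (simp add: mult_ac)
  then have "code_fidelity p n (css_code p n V W) \<rho>
      = (\<Sum>x\<in>Zpn p n. \<Sum>i<m. complex_of_real (pr i) * cnj (\<psi> i x) * css_proj p n V W (\<psi> i) x)"
    by (simp add: code_fidelity_def proj_css_code[OF assms(1-4)] css_proj_sum)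
  also have "\<dots> = (\<Sum>i<m. complex_of_real (pr i) * cinner p n (\<psi> i) (css_proj p n V W (\<psi> i)))"
    by (subst sum.swap) (simp add: cinner_def sum_distrib_left mult_ac)
  finally show ?thesis .
qed

lemma mem_css_code_if_css_proj_defect_0:
  assumes p: "1 < p" and V: "linear_code p n V" and W: "linear_code p n W"
    and VW: "dual_code p n V \<subseteq> W"
    and \<psi>: "in_space p n \<psi>" and defect: "(\<Sum>x\<in>Zpn p n. (cmod (\<psi> x - css_proj p n V W \<psi> x))\<^sup>2) = 0"
  shows "\<psi> \<in> css_code p n V W"
proof -
  have "\<psi> x = css_proj p n V W \<psi> x" for x
  proof (cases "x \<in> Zpn p n")
    case True
    then show ?thesis
      using defect by (simp add: sum_nonneg_eq_0_iff)
  next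
    case False
    then show ?thesis
      using \<psi> linear_code_subset[OF V] by (auto simp: in_space_def css_proj_def)
  qed
  then show ?thesis
    using css_proj_in_css_code[OF p V W VW, of \<psi>] by (metis ext)
qed

lemma css_code_fidelity_one_imp_mem:
  fixes m :: nat
  assumes p: "1 < p" and V: "linear_code p n V" and W: "linear_code p n W"
    and VW: "dual_code p n V \<subseteq> W"
    and \<rho>: "\<forall>x y. \<rho> x y = (\<Sum>i<m. complex_of_real (pr i) * \<psi> i x * cnj (\<psi> i y))"
    and pr: "\<forall>i<m. 0 < pr i" "(\<Sum>i<m. pr i) = 1"
    and \<psi>: "\<forall>i<m. in_space p n (\<psi> i) \<and> cinner p n (\<psi> i) (\<psi> i) = 1"
    and fid: "code_fidelity p n (css_code p n V W) \<rho> = 1"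
  shows "\<forall>i<m. \<psi> i \<in> css_code p n V W"
proof (intro allI impI)
  fix i assume i: "i < m"
  let ?\<pi> = "\<lambda>i. css_proj p n V W (\<psi> i)"
  define R where "R i = (\<Sum>x\<in>Zpn p n. (cmod (\<psi> i x - ?\<pi> i x))\<^sup>2)" for i
  have cinner_proj: "cinner p n (\<psi> i) (?\<pi> i) = 1 - complex_of_real (R i)" if "i < m" for i
  proof -
    have "1 - cinner p n (\<psi> i) (?\<pi> i) = complex_of_real (R i)"
      using cinner_css_proj_defect[OF assms(1-4), of "\<psi> i"] \<psi> that
      by (simp only: R_def cinner_self[of p n "\<lambda>x. \<psi> i x - ?\<pi> i x"])
    then show ?thesis
      by (simp add: algebra_simps)
  qed
  have "1 = code_fidelity p n (css_code p n V W) \<rho>"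
    using fid by simp
  also have "\<dots> = (\<Sum>i<m. complex_of_real (pr i) * cinner p n (\<psi> i) (?\<pi> i))"
    by (rule code_fidelity_css_code[OF assms(1-5)])
  also have "\<dots> = (\<Sum>i<m. complex_of_real (pr i * (1 - R i)))"
    by (intro sum.cong refl) (simp add: cinner_proj)
  also have "\<dots> = complex_of_real (1 - (\<Sum>i<m. pr i * R i))"
    using pr(2) by (simp only: of_real_sum[symmetric]) (simp add: algebra_simps sum_subtractf)
  finally have "complex_of_real (1 - (\<Sum>i<m. pr i * R i)) = complex_of_real 1"
    by simp
  then have sum_zero: "(\<Sum>i<m. pr i * R i) = 0"
    by (simp only: of_real_eq_iff)
  have nonneg: "0 \<le> pr i * R i" if "i \<in> {..<m}" for i
    using pr(1) that unfolding R_def by (auto intro!: mult_nonneg_nonneg sum_nonneg simp: less_imp_le)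
  have "pr i * R i = 0"
    using sum_nonneg_eq_0_iff[of "{..<m}" "\<lambda>i. pr i * R i", OF finite_lessThan nonneg] sum_zero i by blast
  then have "R i = 0"
    using i pr(1) by auto
  then show "\<psi> i \<in> css_code p n V W"
    using mem_css_code_if_css_proj_defect_0[OF assms(1-4)] \<psi> i by (simp add: R_def)
qed

section \<open>Decomposition of density operators\<close>

definition sesq :: "'a set \<Rightarrow> ('a \<Rightarrow> 'a \<Rightarrow> complex) \<Rightarrow> ('a \<Rightarrow> complex) \<Rightarrow> ('a \<Rightarrow> complex) \<Rightarrow> complex" where
  "sesq X r f g = (\<Sum>x\<in>X. \<Sum>y\<in>X. cnj (f x) * r x y * g y)"

definition hermitian :: "('a \<Rightarrow> 'a \<Rightarrow> complex) \<Rightarrow> bool" where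
  "hermitian r \<longleftrightarrow> (\<forall>x y. r y x = cnj (r x y))"

definition psd_on :: "'a set \<Rightarrow> ('a \<Rightarrow> 'a \<Rightarrow> complex) \<Rightarrow> bool" where
  "psd_on X r \<longleftrightarrow> (\<forall>f. 0 \<le> Re (sesq X r f f))"

lemma sesq_add_left: "sesq X r (\<lambda>x. f1 x + f2 x) g = sesq X r f1 g + sesq X r f2 g"
  by (simp add: sesq_def distrib_left distrib_right sum.distrib)

lemma sesq_add_right: "sesq X r f (\<lambda>x. g1 x + g2 x) = sesq X r f g1 + sesq X r f g2"
  by (simp add: sesq_def distrib_left distrib_right sum.distrib)

lemma sesq_scale_left: "sesq X r (\<lambda>x. c * f x) g = cnj c * sesq X r f g"
  by (simp add: sesq_def sum_distrib_left mult_ac)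

lemma sesq_scale_right: "sesq X r f (\<lambda>x. c * g x) = c * sesq X r f g"
  by (simp add: sesq_def sum_distrib_left mult_ac)

lemma sesq_indicator_left:
  assumes "finite X" "a \<in> X"
  shows "sesq X r (indicator {a}) g = (\<Sum>y\<in>X. r a y * g y)"
proof -
  have "sesq X r (indicator {a}) g = (\<Sum>x\<in>X. if x = a then (\<Sum>y\<in>X. r a y * g y) else 0)"
    unfolding sesq_def by (intro sum.cong refl) (simp add: indicator_def)
  then show ?thesis
    using assms by simp
qed

lemma sesq_indicator_right:
  "finite X \<Longrightarrow> b \<in> X \<Longrightarrow> sesq X r f (indicator {b}) = (\<Sum>x\<in>X. cnj (f x) * r x b)"
  by (simp add: sesq_def indicator_def)

lemma sesq_indicator_indicator:
  "finite X \<Longrightarrow> a \<in> X \<Longrightarrow> b \<in> X \<Longrightarrow> sesq X r (indicator {a}) (indicator {b}) = r a b"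
  by (simp add: sesq_indicator_left indicator_def)

lemma hermitianD: "hermitian r \<Longrightarrow> r y x = cnj (r x y)"
  unfolding hermitian_def by blast

lemma hermitian_diag_real: "hermitian r \<Longrightarrow> r a a = complex_of_real (Re (r a a))"
proof -
  assume "hermitian r"
  then have "Im (r a a) = Im (cnj (r a a))"
    by (metis hermitianD)
  then have "Im (r a a) = 0"
    by simp
  then show ?thesis
    by (simp add: complex_eq_iff)
qed

lemma psd_diag_nonneg: "finite X \<Longrightarrow> psd_on X r \<Longrightarrow> a \<in> X \<Longrightarrow> 0 \<le> Re (r a a)"
  using sesq_indicator_indicator[of X a a r] by (metis psd_on_def)

lemma psd_diag_zero_imp_row_zero:
  assumes X: "finite X" and h: "hermitian r" and ps: "psd_on X r"
    and a: "a \<in> X" and b: "b \<in> X" and raa: "r a a = 0"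
  shows "r a b = 0"
proof (rule ccontr)
  assume nz: "r a b \<noteq> 0"
  define c where "c = r a b"
  define t :: real where "t = (\<bar>Re (r b b)\<bar> + 1) / (2 * (cmod c)\<^sup>2)"
  define s where "s = - complex_of_real t * c"
  have cpos: "0 < (cmod c)\<^sup>2" using nz by (simp add: c_def)
  let ?f = "\<lambda>x. s * indicator {a} x + indicator {b} x"
  have "sesq X r ?f ?f = cnj s * (s * r a a + r a b) + (s * r b a + r b b)"
    using X a b
    by (simp add: sesq_add_left sesq_add_right sesq_scale_left sesq_scale_right sesq_indicator_indicator
        algebra_simps)
  also have "\<dots> = cnj s * c + s * cnj c + r b b"
    using raa hermitianD[OF h, of a b] by (simp add: c_def)
  also have "\<dots> = - 2 * complex_of_real (t * (cmod c)\<^sup>2) + r b b"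
    by (simp add: s_def complex_norm_square[symmetric] algebra_simps)
  finally have "Re (sesq X r ?f ?f) = - 2 * (t * (cmod c)\<^sup>2) + Re (r b b)"
    by simp
  also have "- 2 * (t * (cmod c)\<^sup>2) = - (\<bar>Re (r b b)\<bar> + 1)"
    using cpos by (simp add: t_def)
  finally have "Re (sesq X r ?f ?f) < 0"
    by linarith
  then show False
    using ps by (auto simp: psd_on_def not_le dest: spec[of _ ?f])
qed

definition schur_complement :: "('a \<Rightarrow> 'a \<Rightarrow> complex) \<Rightarrow> 'a \<Rightarrow> 'a \<Rightarrow> 'a \<Rightarrow> complex" where
  "schur_complement r x0 = (\<lambda>y z. r y z - r y x0 * r x0 z / r x0 x0)"

lemma hermitian_schur_complement:
  assumes h: "hermitian r"
  shows "hermitian (schur_complement r x0)"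
  unfolding hermitian_def schur_complement_def
proof (intro allI)
  fix y z
  show "r z y - r z x0 * r x0 y / r x0 x0 = cnj (r y z - r y x0 * r x0 z / r x0 x0)"
    using hermitianD[OF h, of y z] hermitianD[OF h, of x0 z] hermitianD[OF h, of y x0]
      hermitianD[OF h, of x0 x0] by simp
qed

lemma psd_schur_complement:
  assumes X: "finite X" and h: "hermitian r" and ps: "psd_on X r" and x0: "x0 \<in> X"
  shows "psd_on X (schur_complement r x0)"
  unfolding psd_on_def
proof
  fix f
  define d where "d = r x0 x0"
  define a where "a = (\<Sum>z\<in>X. r x0 z * f z)"
  have cnj_d: "cnj d = d"
    using hermitianD[OF h, of x0 x0] by (simp add: d_def)
  have cnj_a: "(\<Sum>y\<in>X. cnj (f y) * r y x0) = cnj a"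
    unfolding a_def by (simp add: hermitianD[OF h, of x0] mult.commute)
  have "sesq X (schur_complement r x0) f f = sesq X r f f - cnj a * a / d"
  proof -
    have "sesq X (schur_complement r x0) f f
        = sesq X r f f - (\<Sum>y\<in>X. \<Sum>z\<in>X. (cnj (f y) * r y x0) * (r x0 z * f z) / d)"
      by (simp add: sesq_def schur_complement_def d_def algebra_simps sum_subtractf)
    also have "(\<Sum>y\<in>X. \<Sum>z\<in>X. (cnj (f y) * r y x0) * (r x0 z * f z) / d)
        = (\<Sum>y\<in>X. cnj (f y) * r y x0) * (\<Sum>z\<in>X. r x0 z * f z) / d"
      by (simp add: sum_product sum_divide_distrib)
    finally show ?thesis
      using cnj_a by (simp add: a_def)
  qed
  \<comment> \<open>completing the square: the test vector is \<open>f - (a / d) \<delta>\<^sub>x\<^sub>0\<close>\<close>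
  also have "\<dots> = sesq X r f f + (- a / d) * cnj a + cnj (- a / d) * a + cnj (- a / d) * (- a / d) * d"
    using cnj_d by (cases "d = 0") (simp_all add: field_simps)
  also have "\<dots> = sesq X r f f + (- a / d) * sesq X r f (indicator {x0})
      + cnj (- a / d) * sesq X r (indicator {x0}) f
      + cnj (- a / d) * (- a / d) * sesq X r (indicator {x0}) (indicator {x0})"
    using sesq_indicator_right[OF X x0, of r f] sesq_indicator_left[OF X x0, of r f]
      sesq_indicator_indicator[OF X x0 x0, of r] cnj_a
    by (simp add: a_def d_def)
  also have "\<dots> = sesq X r (\<lambda>x. f x + (- a / d) * indicator {x0} x) (\<lambda>x. f x + (- a / d) * indicator {x0} x)"
    by (simp only: sesq_add_left sesq_add_right sesq_scale_left sesq_scale_right) (simp add: algebra_simps)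
  finally show "0 \<le> Re (sesq X (schur_complement r x0) f f)"
    using ps by (simp add: psd_on_def)
qed

lemma card_diag_support_schur_complement:
  assumes X: "finite X" and h: "hermitian r" and ps: "psd_on X r"
    and x0: "x0 \<in> X" "r x0 x0 \<noteq> 0"
  shows "card {x\<in>X. schur_complement r x0 x x \<noteq> 0} < card {x\<in>X. r x x \<noteq> 0}"
proof -
  have "{x\<in>X. schur_complement r x0 x x \<noteq> 0} \<subseteq> {x\<in>X. r x x \<noteq> 0} - {x0}"
  proof
    fix y assume y: "y \<in> {x\<in>X. schur_complement r x0 x x \<noteq> 0}"
    then have "r y x0 \<noteq> 0 \<or> r y y \<noteq> 0"
      by (auto simp: schur_complement_def)
    then have "r y y \<noteq> 0"
      using psd_diag_zero_imp_row_zero[OF X h ps _ x0(1)] y by blast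
    moreover have "y \<noteq> x0"
      using y x0 by (auto simp: schur_complement_def)
    ultimately show "y \<in> {x\<in>X. r x x \<noteq> 0} - {x0}"
      using y by blast
  qed
  then have "card {x\<in>X. schur_complement r x0 x x \<noteq> 0} \<le> card ({x\<in>X. r x x \<noteq> 0} - {x0})"
    using X by (intro card_mono) auto
  also have "\<dots> < card {x\<in>X. r x x \<noteq> 0}"
    using X x0 by (intro card_Diff1_less) auto
  finally show ?thesis .
qed

lemma schur_complement_rank_one:
  assumes h: "hermitian r" and d: "0 < Re (r x0 x0)"
  defines "u \<equiv> \<lambda>y. r y x0 / complex_of_real (sqrt (Re (r x0 x0)))"
  shows "r x y = schur_complement r x0 x y + u x * cnj (u y)"
proof -
  have "complex_of_real (sqrt (Re (r x0 x0))) * complex_of_real (sqrt (Re (r x0 x0))) = r x0 x0"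
    using d hermitian_diag_real[OF h, of x0] by (simp flip: of_real_mult)
  then show ?thesis
    using d hermitianD[OF h, of y x0]
    by (simp add: u_def schur_complement_def field_simps)
qed

lemma psd_gram_decomposition:
  assumes X: "finite X"
  shows "hermitian r \<Longrightarrow> psd_on X r \<Longrightarrow> (\<forall>x y. x \<notin> X \<or> y \<notin> X \<longrightarrow> r x y = 0) \<Longrightarrow>
    \<exists>m (v :: nat \<Rightarrow> 'a \<Rightarrow> complex). (\<forall>i<m. \<forall>x. x \<notin> X \<longrightarrow> v i x = 0) \<and> (\<forall>i<m. \<exists>x\<in>X. v i x \<noteq> 0) \<and>
       (\<forall>x y. r x y = (\<Sum>i<m. v i x * cnj (v i y)))"
proof (induction "card {x\<in>X. r x x \<noteq> 0}" arbitrary: r rule: less_induct)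
  case less
  note h = less.prems(1) and ps = less.prems(2) and supp = less.prems(3)
  show ?case
  proof (cases "\<exists>x0\<in>X. r x0 x0 \<noteq> 0")
    case False
    then have "r x y = 0" for x y
      using psd_diag_zero_imp_row_zero[OF X h ps] supp by blast
    then show ?thesis by (intro exI[of _ 0]) simp
  next
    case True
    then obtain x0 where x0: "x0 \<in> X" "r x0 x0 \<noteq> 0" by blast
    have d: "0 < Re (r x0 x0)"
      using psd_diag_nonneg[OF X ps x0(1)] hermitian_diag_real[OF h, of x0] x0(2)
      by (metis less_eq_real_def of_real_0)
    define u where "u = (\<lambda>y. r y x0 / complex_of_real (sqrt (Re (r x0 x0))))"
    have supp': "\<forall>x y. x \<notin> X \<or> y \<notin> X \<longrightarrow> schur_complement r x0 x y = 0"
      using supp x0(1) by (auto simp: schur_complement_def)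
    obtain m :: nat and w where w: "\<forall>i<m. \<forall>x. x \<notin> X \<longrightarrow> w i x = 0" "\<forall>i<m. \<exists>x\<in>X. w i x \<noteq> 0"
        "\<forall>x y. schur_complement r x0 x y = (\<Sum>i<m. w i x * cnj (w i y))"
      using less.hyps[OF card_diag_support_schur_complement[OF X h ps x0]
          hermitian_schur_complement[OF h] psd_schur_complement[OF X h ps x0(1)] supp'] by blast
    define v where "v = (\<lambda>i. if i < m then w i else u)"
    show ?thesis
    proof (intro exI conjI)
      show "\<forall>i<Suc m. \<forall>x. x \<notin> X \<longrightarrow> v i x = 0"
        using w(1) supp x0(1) by (auto simp: v_def u_def less_Suc_eq)
      show "\<forall>i<Suc m. \<exists>x\<in>X. v i x \<noteq> 0"
        using w(2) x0 d by (auto simp: v_def u_def less_Suc_eq)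
      show "\<forall>x y. r x y = (\<Sum>i<Suc m. v i x * cnj (v i y))"
      proof (intro allI)
        fix x y
        have "r x y = schur_complement r x0 x y + u x * cnj (u y)"
          unfolding u_def by (rule schur_complement_rank_one[OF h d])
        also have "\<dots> = (\<Sum>i<Suc m. v i x * cnj (v i y))"
          using w(3) by (simp add: v_def)
        finally show "r x y = (\<Sum>i<Suc m. v i x * cnj (v i y))" .
      qed
    qed
  qed
qed

lemma density_pure_state_decomposition:
  assumes "density p n \<rho>"
  shows "\<exists>(m :: nat) (pr :: nat \<Rightarrow> real) (\<psi> :: nat \<Rightarrow> qvec).
    (\<forall>i<m. 0 < pr i) \<and> (\<Sum>i<m. pr i) = 1 \<and>
    (\<forall>i<m. in_space p n (\<psi> i) \<and> cinner p n (\<psi> i) (\<psi> i) = 1) \<and>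
    (\<forall>x y. \<rho> x y = (\<Sum>i<m. complex_of_real (pr i) * \<psi> i x * cnj (\<psi> i y)))"
proof -
  have "hermitian \<rho>" "psd_on (Zpn p n) \<rho>" "\<forall>x y. x \<notin> Zpn p n \<or> y \<notin> Zpn p n \<longrightarrow> \<rho> x y = 0"
    and trace: "(\<Sum>x\<in>Zpn p n. \<rho> x x) = 1"
    using assms unfolding density_def hermitian_def psd_on_def sesq_def by blast+
  then obtain m :: nat and v where v: "\<forall>i<m. \<forall>x. x \<notin> Zpn p n \<longrightarrow> v i x = 0"
      "\<forall>i<m. \<exists>x\<in>Zpn p n. v i x \<noteq> 0" "\<forall>x y. \<rho> x y = (\<Sum>i<m. v i x * cnj (v i y))"
    using psd_gram_decomposition[OF finite_Zpn] by blast
  define N where "N i = (\<Sum>x\<in>Zpn p n. (cmod (v i x))\<^sup>2)" for i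
  define \<psi> where "\<psi> i x = v i x / complex_of_real (sqrt (N i))" for i x
  have N_pos: "0 < N i" if i: "i < m" for i
  proof -
    obtain x where "x \<in> Zpn p n" "v i x \<noteq> 0" using v(2) i by blast
    then have "0 < (cmod (v i x))\<^sup>2 \<and> (cmod (v i x))\<^sup>2 \<le> N i"
      unfolding N_def by (auto intro: member_le_sum)
    then show ?thesis by linarith
  qed
  have cinner_v: "cinner p n (v i) (v i) = complex_of_real (N i)" for i
    by (simp add: cinner_self N_def)
  have scale: "complex_of_real (sqrt (N i)) * complex_of_real (sqrt (N i)) = complex_of_real (N i)"
    if "i < m" for i
    using N_pos[OF that] by (simp flip: of_real_mult)
  show ?thesis
  proof (intro exI conjI allI impI)
    show "0 < N i" if "i < m" for i using N_pos[OF that] .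
    have "complex_of_real (\<Sum>i<m. N i) = (\<Sum>x\<in>Zpn p n. \<Sum>i<m. cnj (v i x) * v i x)"
      by (simp add: cinner_v[symmetric] cinner_def sum.swap[of _ "{..<m}"])
    also have "\<dots> = 1"
      using v(3) trace by (simp add: mult.commute)
    finally show "(\<Sum>i<m. N i) = 1"
      by (simp only: of_real_eq_1_iff)
    show "in_space p n (\<psi> i)" if "i < m" for i
      using v(1) that by (simp add: in_space_def \<psi>_def)
    show "cinner p n (\<psi> i) (\<psi> i) = 1" if "i < m" for i
      using cinner_v[of i] scale[OF that] N_pos[OF that]
      by (simp add: cinner_def \<psi>_def flip: sum_divide_distrib)
    show "\<rho> x y = (\<Sum>i<m. complex_of_real (N i) * \<psi> i x * cnj (\<psi> i y))" for x y
      using v(3) scale by (auto simp: \<psi>_def intro!: sum.cong dest: N_pos)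
  qed
qed

section \<open>Twirling over Paulis supported on \<open>B\<close>\<close>

definition supp_vectors :: "nat \<Rightarrow> nat \<Rightarrow> nat set \<Rightarrow> (nat \<Rightarrow> nat) set" where
  "supp_vectors p n B = {x \<in> Zpn p n. \<forall>i. i \<notin> B \<longrightarrow> x i = 0}"

lemma supp_vectors_subset: "supp_vectors p n B \<subseteq> Zpn p n"
  by (auto simp: supp_vectors_def)

lemma linear_code_supp_vectors: "0 < p \<Longrightarrow> linear_code p n (supp_vectors p n B)"
  by (auto simp: linear_code_def supp_vectors_def) (simp_all add: vadd_def smul_def)

lemma linear_code_punct:
  assumes p: "0 < p" and V: "linear_code p n V"
  shows "linear_code p n (punct p n V B)"
  unfolding linear_code_def
proof (intro conjI ballI allI impI)
  fix u v assume "u \<in> punct p n V B" "v \<in> punct p n V B"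
  then obtain wu wv where "wu \<in> V" "wv \<in> V" "\<forall>i. i \<notin> B \<longrightarrow> u i = wu i" "\<forall>i. i \<notin> B \<longrightarrow> v i = wv i"
    "u \<in> Zpn p n" "v \<in> Zpn p n"
    by (auto simp: punct_def)
  moreover have "\<forall>i. i \<notin> B \<longrightarrow> vadd p u v i = vadd p wu wv i"
    using calculation by (simp add: vadd_def)
  ultimately show "vadd p u v \<in> punct p n V B"
    using p linear_code_vadd[OF V] unfolding punct_def by auto
next
  fix a u assume "u \<in> punct p n V B"
  then obtain wu where "wu \<in> V" "\<forall>i. i \<notin> B \<longrightarrow> u i = wu i" "u \<in> Zpn p n"
    by (auto simp: punct_def)
  moreover have "\<forall>i. i \<notin> B \<longrightarrow> smul p a u i = smul p a wu i"
    using calculation by (simp add: smul_def)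
  ultimately show "smul p a u \<in> punct p n V B"
    using p linear_code_smul[OF V] unfolding punct_def by auto
qed (use p linear_code_zero[OF V] in \<open>auto simp: punct_def\<close>)

lemma subset_punct: "linear_code p n V \<Longrightarrow> V \<subseteq> punct p n V B"
  using linear_code_subset unfolding punct_def by blast

lemma dual_punct_subset_punct:
  assumes "linear_code p n V" "linear_code p n W" "dual_code p n V \<subseteq> W"
  shows "dual_code p n (punct p n V B) \<subseteq> punct p n W B"
proof -
  have "dual_code p n (punct p n V B) \<subseteq> dual_code p n V"
    by (rule dual_code_antimono[OF subset_punct[OF assms(1)]])
  also have "\<dots> \<subseteq> punct p n W B"
    using assms(3) subset_punct[OF assms(2)] by blast
  finally show ?thesis .
qed

lemma punct_decompose:
  assumes p: "0 < p" and V: "linear_code p n V" and y: "y \<in> punct p n V B"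
  obtains w where "w \<in> V" "vsub p y w \<in> supp_vectors p n B"
proof -
  obtain w where w: "w \<in> V" "\<forall>i. i \<notin> B \<longrightarrow> y i = w i"
    using y by (auto simp: punct_def)
  have "w \<in> Zpn p n" "y \<in> Zpn p n"
    using w(1) y linear_code_subset[OF V] by (auto simp: punct_def)
  moreover have "\<forall>i. i \<notin> B \<longrightarrow> vsub p y w i = 0"
    using w(2) by (simp add: vsub_def)
  ultimately have "vsub p y w \<in> supp_vectors p n B"
    using p by (simp add: supp_vectors_def)
  then show ?thesis using w(1) that by blast
qed

lemma dual_code_subset_dual_punct:
  assumes p: "0 < p" and W: "linear_code p n W"
    and b: "b \<in> dual_code p n W" and orth: "\<forall>z\<in>supp_vectors p n B. dot p n z b = 0"
  shows "b \<in> dual_code p n (punct p n W B)"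
  unfolding dual_code_def
proof (intro CollectI conjI ballI)
  show "b \<in> Zpn p n" using b dual_code_subset by blast
  fix y assume y: "y \<in> punct p n W B"
  then obtain w where w: "w \<in> W" "vsub p y w \<in> supp_vectors p n B"
    using punct_decompose[OF p W] by blast
  have "y = vadd p (vsub p y w) w"
    using y w(1) linear_code_subset[OF W] vadd_vsub_cancel[OF p] by (auto simp: punct_def)
  then have "dot p n b y = (dot p n b (vsub p y w) + dot p n b w) mod p"
    by (metis dot_vadd)
  also have "\<dots> = 0"
    using orth w b dot_sym[of p n b] by (simp add: dual_code_def)
  finally show "dot p n b y = 0" .
qed

lemma card_coset_supp_vectors:
  assumes p: "0 < p" and V: "linear_code p n V" and y: "y \<in> punct p n V B"
  shows "card {a \<in> supp_vectors p n B. vsub p y a \<in> V} = card (supp_vectors p n B \<inter> V)"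
proof -
  let ?Z = "supp_vectors p n B"
  obtain w where w: "w \<in> V" and yw: "vsub p y w \<in> ?Z"
    using punct_decompose[OF p V y] by blast
  define e where "e = vsub p y w"
  have Z: "\<And>a. a \<in> ?Z \<Longrightarrow> a \<in> Zpn p n"
    using supp_vectors_subset by blast
  have yZ: "y \<in> Zpn p n" and wZ: "w \<in> Zpn p n" and eB: "e \<in> ?Z"
    using y w yw linear_code_subset[OF V] by (auto simp: punct_def e_def)
  note eZ = Z[OF eB]
  have coset: "vsub p y a \<in> V \<longleftrightarrow> vsub p e a \<in> V" if a: "a \<in> Zpn p n" for a
  proof
    assume "vsub p y a \<in> V"
    then show "vsub p e a \<in> V"
      using linear_code_vsub[OF V p _ w] vsub_vsub_commute[OF p yZ a wZ] by (metis e_def)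
  next
    assume "vsub p e a \<in> V"
    then show "vsub p y a \<in> V"
      using linear_code_vadd[OF V w] vadd_vsub_vsub_swap[OF p yZ a wZ] by (metis e_def)
  qed
  have e_minus: "vsub p e a \<in> ?Z" if "a \<in> ?Z" for a
    using linear_code_vsub[OF linear_code_supp_vectors[OF p] p eB that] .
  have "{a \<in> ?Z. vsub p y a \<in> V} = vsub p e ` (?Z \<inter> V)"
  proof (intro equalityI subsetI)
    fix a assume "a \<in> {a \<in> ?Z. vsub p y a \<in> V}"
    then show "a \<in> vsub p e ` (?Z \<inter> V)"
      using coset Z e_minus vsub_vsub_cancel[OF p eZ] by (intro image_eqI[of _ _ "vsub p e a"]) auto
  next
    fix a assume "a \<in> vsub p e ` (?Z \<inter> V)"
    then show "a \<in> {a \<in> ?Z. vsub p y a \<in> V}"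
      using coset Z e_minus vsub_vsub_cancel[OF p eZ] by auto
  qed
  moreover have "inj_on (vsub p e) (?Z \<inter> V)"
    using vsub_vsub_cancel[OF p eZ] Z by (metis IntD1 inj_onI)
  ultimately show ?thesis
    by (simp add: card_image)
qed

definition pauli_adj :: "nat \<Rightarrow> nat \<Rightarrow> (nat \<Rightarrow> nat) \<Rightarrow> (nat \<Rightarrow> nat) \<Rightarrow> qvec \<Rightarrow> qvec" where
  "pauli_adj p n a z \<psi> = (\<lambda>y. cnj (chi p n z y) * \<psi> (vadd p y a))"

lemma pauli_chi:
  "pauli p n x z \<psi> = (\<lambda>b. if b \<in> Zpn p n then chi p n z (vsub p b x) * \<psi> (vsub p b x) else 0)"
  by (simp only: pauli_def chi_def)

lemma pauli_css_proj_pauli_adj: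
  assumes p: "0 < p" and y: "y \<in> Zpn p n" and a: "a \<in> Zpn p n"
  shows "pauli p n a z (css_proj p n V W (pauli_adj p n a z \<psi>)) y
    = (if vsub p y a \<in> V then (1 / of_nat (card (dual_code p n W))) *
         (\<Sum>b\<in>dual_code p n W. chi p n z b * \<psi> (vsub p y b)) else 0)"
proof -
  let ?u = "vsub p y a"
  have "chi p n z ?u * (cnj (chi p n z (vsub p ?u b)) * \<psi> (vadd p (vsub p ?u b) a))
      = chi p n z b * \<psi> (vsub p y b)" if b: "b \<in> dual_code p n W" for b
  proof -
    have bZ: "b \<in> Zpn p n" using b dual_code_subset by blast
    have "chi p n z ?u * cnj (chi p n z (vsub p ?u b)) = chi p n z b"
      using chi_vsub[OF p bZ, of z ?u] by (simp add: mult_ac)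
    then show ?thesis
      using vadd_vsub_vsub[OF p y a bZ] by (simp add: mult.assoc[symmetric])
  qed
  then show ?thesis
    using y by (simp add: pauli_chi css_proj_def pauli_adj_def sum_distrib_left mult_ac cong: sum.cong)
qed

lemma sum_chi_supp_vectors_shift:
  assumes p: "0 < p" and W: "linear_code p n W"
    and inv: "shift_invariant p n (dual_code p n (punct p n W B)) \<psi>" and y: "y \<in> Zpn p n"
  shows "(\<Sum>z\<in>supp_vectors p n B. \<Sum>b\<in>dual_code p n W. chi p n z b * \<psi> (vsub p y b))
    = of_nat (card (supp_vectors p n B) * card {b \<in> dual_code p n W. \<forall>z\<in>supp_vectors p n B. dot p n z b = 0})
      * \<psi> y"
proof -
  let ?Z = "supp_vectors p n B"
  let ?Dz = "{b \<in> dual_code p n W. \<forall>z\<in>?Z. dot p n z b = 0}"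
  have summand: "(\<Sum>z\<in>?Z. chi p n z b) * \<psi> (vsub p y b) = (if b \<in> ?Dz then of_nat (card ?Z) * \<psi> y else 0)"
    if b: "b \<in> dual_code p n W" for b
  proof (cases "\<forall>z\<in>?Z. dot p n z b = 0")
    case True
    have bZ: "b \<in> Zpn p n" using b dual_code_subset by blast
    have "\<psi> (vsub p y b) = \<psi> (vadd p (vsub p y b) b)"
      using inv dual_code_subset_dual_punct[OF p W b True] p y bZ by (simp add: shift_invariant_def)
    then show ?thesis
      using True b sum_chi_linear_code[OF linear_code_supp_vectors[OF p, of n B] p, where y=b]
      by (simp add: vadd_vsub_cancel[OF p y bZ])
  next
    case False
    then have "(\<Sum>z\<in>?Z. chi p n z b) = 0"
      using sum_chi_linear_code[OF linear_code_supp_vectors[OF p, of n B] p, where y=b]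
      by (simp only: if_not_P[OF False] if_False)
    then show ?thesis
      using False by auto
  qed
  have "(\<Sum>z\<in>?Z. \<Sum>b\<in>dual_code p n W. chi p n z b * \<psi> (vsub p y b))
      = (\<Sum>b\<in>dual_code p n W. (\<Sum>z\<in>?Z. chi p n z b) * \<psi> (vsub p y b))"
    by (subst sum.swap) (simp add: sum_distrib_right)
  also have "\<dots> = (\<Sum>b\<in>dual_code p n W. if b \<in> ?Dz then of_nat (card ?Z) * \<psi> y else 0)"
    using summand by (rule sum.cong[OF refl])
  also have "\<dots> = of_nat (card ?Dz) * (of_nat (card ?Z) * \<psi> y)"
    using finite_linear_code[OF linear_code_dual[OF p]]
    by (simp add: sum.If_cases Int_absorb1 Collect_conj_eq)
  finally show ?thesis
    by (simp add: mult_ac)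
qed

text \<open>The factors count the \<open>z\<close> in the character sum, the translations \<open>b \<in> W\<^sup>\<perp>\<close> orthogonal
  to all \<open>z\<close>, and the \<open>a\<close> with \<open>y - a \<in> V\<close>; the denominator is the normalisation of \<open>\<Pi>\<^sub>C\<close>.\<close>
definition twirl_factor :: "nat \<Rightarrow> nat \<Rightarrow> (nat \<Rightarrow> nat) set \<Rightarrow> (nat \<Rightarrow> nat) set \<Rightarrow> nat set \<Rightarrow> complex" where
  "twirl_factor p n V W B =
     of_nat (card (supp_vectors p n B) * card {b \<in> dual_code p n W. \<forall>z\<in>supp_vectors p n B. dot p n z b = 0}
       * card (supp_vectors p n B \<inter> V)) / of_nat (card (dual_code p n W))"

lemma twirl_factor_nonzero:
  assumes "0 < p" "linear_code p n V"
  shows "twirl_factor p n V W B \<noteq> 0"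
proof -
  have "finite (supp_vectors p n B)" "finite (dual_code p n W)"
    using assms finite_linear_code linear_code_supp_vectors linear_code_dual by blast+
  moreover have "(\<lambda>i. 0) \<in> supp_vectors p n B \<inter> V"  "(\<lambda>i. 0) \<in> dual_code p n W"
    using assms linear_code_zero linear_code_supp_vectors linear_code_dual by blast+
  ultimately show ?thesis
    by (auto simp: twirl_factor_def card_gt_0_iff)
qed

lemma twirl_css_punct:
  assumes p: "1 < p" and V: "linear_code p n V" and W: "linear_code p n W"
    and \<psi>: "\<psi> \<in> css_code p n (punct p n V B) (punct p n W B)"
  shows "(\<Sum>(a, z)\<in>supp_vectors p n B \<times> supp_vectors p n B.
            pauli p n a z (css_proj p n V W (pauli_adj p n a z \<psi>)) y)
    = twirl_factor p n V W B * \<psi> y"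
proof -
  have p0: "0 < p" using p by simp
  let ?Z = "supp_vectors p n B"
  let ?N = "of_nat (card (dual_code p n W)) :: complex"
  let ?Dz = "{b \<in> dual_code p n W. \<forall>z\<in>?Z. dot p n z b = 0}"
  have \<psi>_V: "\<psi> x = 0" if "x \<notin> punct p n V B" for x
    using \<psi> that css_code_iff[OF p linear_code_punct[OF p0 V] linear_code_punct[OF p0 W]] by blast
  have \<psi>_inv: "shift_invariant p n (dual_code p n (punct p n W B)) \<psi>"
    using \<psi> css_code_iff[OF p linear_code_punct[OF p0 V] linear_code_punct[OF p0 W]] by blast
  show ?thesis
  proof (cases "y \<in> Zpn p n")
    case False
    then show ?thesis
      using \<psi>_V by (simp add: pauli_def punct_def)
  next
    case y: True
    have "(\<Sum>(a, z)\<in>?Z \<times> ?Z. pauli p n a z (css_proj p n V W (pauli_adj p n a z \<psi>)) y)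
        = (\<Sum>a\<in>?Z. \<Sum>z\<in>?Z. if vsub p y a \<in> V then
             (1 / ?N) * (\<Sum>b\<in>dual_code p n W. chi p n z b * \<psi> (vsub p y b)) else 0)"
      using y supp_vectors_subset[of p n B]
      by (auto simp: sum.cartesian_product[symmetric] pauli_css_proj_pauli_adj[OF p0] intro!: sum.cong)
    also have "\<dots> = (\<Sum>a\<in>?Z. if vsub p y a \<in> V then (1 / ?N) * (of_nat (card ?Z * card ?Dz) * \<psi> y) else 0)"
      by (intro sum.cong refl)
         (simp add: sum_chi_supp_vectors_shift[OF p0 W \<psi>_inv y] flip: sum_divide_distrib)
    also have "\<dots> = of_nat (card {a \<in> ?Z. vsub p y a \<in> V}) * ((1 / ?N) * (of_nat (card ?Z * card ?Dz) * \<psi> y))"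
      using finite_linear_code[OF linear_code_supp_vectors[OF p0]]
      by (simp add: sum.If_cases Collect_conj_eq)
    also have "\<dots> = twirl_factor p n V W B * \<psi> y"
      using card_coset_supp_vectors[OF p0 V] \<psi>_V by (cases "y \<in> punct p n V B") (auto simp: twirl_factor_def)
    finally show ?thesis .
  qed
qed

lemma pauli_supp_subset:
  "a \<in> supp_vectors p n B \<Longrightarrow> z \<in> supp_vectors p n B \<Longrightarrow> pauli_supp a z \<subseteq> B"
  by (auto simp: supp_vectors_def pauli_supp_def)

lemma css_punct_pauli_expansion:
  assumes p: "1 < p" and V: "linear_code p n V" and W: "linear_code p n W"
  obtains k :: nat and ex ez :: "nat \<Rightarrow> nat \<Rightarrow> nat" where "\<forall>j<k. ex j \<in> supp_vectors p n B \<and> ez j \<in> supp_vectors p n B"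
    and "\<And>\<psi>. \<psi> \<in> css_code p n (punct p n V B) (punct p n W B) \<Longrightarrow>
      \<psi> = (\<lambda>x. \<Sum>j<k. (1 / twirl_factor p n V W B) *
        pauli p n (ex j) (ez j) (css_proj p n V W (pauli_adj p n (ex j) (ez j) \<psi>)) x)"
proof -
  let ?Z = "supp_vectors p n B"
  obtain h where h: "bij_betw h {..<card (?Z \<times> ?Z)} (?Z \<times> ?Z)"
    using ex_bij_betw_nat_finite[of "?Z \<times> ?Z"] finite_linear_code[OF linear_code_supp_vectors] p
    by (auto simp: atLeast0LessThan)
  have "\<psi> x = (\<Sum>j<card (?Z \<times> ?Z). (1 / twirl_factor p n V W B) *
      pauli p n (fst (h j)) (snd (h j)) (css_proj p n V W (pauli_adj p n (fst (h j)) (snd (h j)) \<psi>)) x)"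
    if \<psi>: "\<psi> \<in> css_code p n (punct p n V B) (punct p n W B)" for \<psi> x
  proof -
    have "(\<Sum>j<card (?Z \<times> ?Z).
        pauli p n (fst (h j)) (snd (h j)) (css_proj p n V W (pauli_adj p n (fst (h j)) (snd (h j)) \<psi>)) x)
        = twirl_factor p n V W B * \<psi> x"
      using sum.reindex_bij_betw[OF h, of "\<lambda>(a, z). pauli p n a z (css_proj p n V W (pauli_adj p n a z \<psi>)) x"]
        twirl_css_punct[OF p V W \<psi>, of x]
      by (simp add: case_prod_beta)
    then show ?thesis
      using twirl_factor_nonzero[of p n V W B] p V by (simp add: field_simps flip: sum_divide_distrib)
  qed
  moreover have "\<forall>j<card (?Z \<times> ?Z). fst (h j) \<in> ?Z \<and> snd (h j) \<in> ?Z"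
    using bij_betwE[OF h] by (auto simp: mem_Times_iff)
  ultimately show ?thesis
    using that[of "card (?Z \<times> ?Z)" "\<lambda>j. fst (h j)" "\<lambda>j. snd (h j)"] by blast
qed

theorem mainTheorem2:
  fixes p n :: nat and V W :: "(nat \<Rightarrow> nat) set" and B :: "nat set" and \<rho> :: qop
  assumes "prime p"
    and "linear_code p n V" and "linear_code p n W"
    and "dual_code p n V \<subseteq> W"
    and "B \<subseteq> {..<n}"
    and "density p n \<rho>"
    and "code_fidelity p n (css_code p n (punct p n V B) (punct p n W B)) \<rho> = 1"
  shows "\<exists>(m::nat) (k::nat) (pr :: nat \<Rightarrow> real) (c :: nat \<Rightarrow> nat \<Rightarrow> complex)
           (ex :: nat \<Rightarrow> nat \<Rightarrow> nat) (ez :: nat \<Rightarrow> nat \<Rightarrow> nat) (\<phi> :: nat \<Rightarrow> nat \<Rightarrow> qvec)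
           (\<psi> :: nat \<Rightarrow> qvec).
     (\<forall>i<m. pr i \<ge> 0) \<and> (\<Sum>i<m. pr i) = 1 \<and>
     (\<forall>j<k. ex j \<in> Zpn p n \<and> ez j \<in> Zpn p n \<and> pauli_supp (ex j) (ez j) \<subseteq> B) \<and>
     (\<forall>i<m. \<forall>j<k. \<phi> i j \<in> css_code p n V W) \<and>
     (\<forall>i<m. \<psi> i = (\<lambda>x. \<Sum>j<k. c i j * pauli p n (ex j) (ez j) (\<phi> i j) x)) \<and>
     (\<forall>i<m. cinner p n (\<psi> i) (\<psi> i) = 1) \<and>
     (\<forall>x y. \<rho> x y = (\<Sum>i<m. complex_of_real (pr i) * \<psi> i x * cnj (\<psi> i y)))"
proof -
  note V = assms(2) and W = assms(3) and VW = assms(4)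
  have p: "1 < p" and p0: "0 < p"
    using prime_gt_1_nat[OF assms(1)] by simp_all
  obtain m :: nat and pr :: "nat \<Rightarrow> real" and \<psi> :: "nat \<Rightarrow> qvec" where pr: "\<forall>i<m. 0 < pr i" "(\<Sum>i<m. pr i) = 1"
    and \<psi>: "\<forall>i<m. in_space p n (\<psi> i) \<and> cinner p n (\<psi> i) (\<psi> i) = 1"
    and \<rho>: "\<forall>x y. \<rho> x y = (\<Sum>i<m. complex_of_real (pr i) * \<psi> i x * cnj (\<psi> i y))"
    using density_pure_state_decomposition[OF assms(6)] by blast
  have \<psi>_CB: "\<forall>i<m. \<psi> i \<in> css_code p n (punct p n V B) (punct p n W B)"
    using css_code_fidelity_one_imp_mem[OF p linear_code_punct[OF p0 V] linear_code_punct[OF p0 W]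
        dual_punct_subset_punct[OF V W VW] \<rho> pr \<psi> assms(7)] .
  obtain k :: nat and ex ez :: "nat \<Rightarrow> nat \<Rightarrow> nat" where paulis: "\<forall>j<k. ex j \<in> supp_vectors p n B \<and> ez j \<in> supp_vectors p n B"
    and expansion: "\<And>\<psi>. \<psi> \<in> css_code p n (punct p n V B) (punct p n W B) \<Longrightarrow>
      \<psi> = (\<lambda>x. \<Sum>j<k. (1 / twirl_factor p n V W B) *
        pauli p n (ex j) (ez j) (css_proj p n V W (pauli_adj p n (ex j) (ez j) \<psi>)) x)"
    using css_punct_pauli_expansion[OF p V W] by blast
  have paulis_on_B: "\<forall>j<k. ex j \<in> Zpn p n \<and> ez j \<in> Zpn p n \<and> pauli_supp (ex j) (ez j) \<subseteq> B"
    using paulis supp_vectors_subset[of p n B] pauli_supp_subset by blast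
  show ?thesis
    by (rule exI[of _ m], rule exI[of _ k], rule exI[of _ pr], rule exI[of _ "\<lambda>i j. 1 / twirl_factor p n V W B"],
        rule exI[of _ ex], rule exI[of _ ez],
        rule exI[of _ "\<lambda>i j. css_proj p n V W (pauli_adj p n (ex j) (ez j) (\<psi> i))"], rule exI[of _ \<psi>])
       (use pr \<psi> \<rho> \<psi>_CB paulis_on_B expansion css_proj_in_css_code[OF p V W VW] in \<open>auto simp: less_imp_le\<close>)
qed

end
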